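(* Let $\Delta\ge3$ and $n\ge 3\Delta+4$ be odd integers. Then ${\rm EX}^{\infty}(\mathcal G_{\Delta,n})=\mathcal V_{\Delta+1,n}$.
   Context: A walk of length $\ell\ge1$ in a graph $G$ is a sequence of vertices $v_0,v_1,\dots,v_\ell$ with $v_i v_{i+1}$ an edge for $0\le i\le\ell-1$; its starting vertex is $v_0$. Let $w^\ell_G(u)$ be the number of walks of length $\ell$ starting at $u$, and let $W^\ell(G)=\sum_{u\in V(G)}w^\ell_G(u)$. For a family $\mathcal G$ of graphs, define: \begin{itemize} \item ${\rm EX}^1(\mathcal G)=\{G\in\mathcal G: W^1(G)\ge W^1(G')\ \text{for all } G'\in\mathcal G\}$; \item for $\ell\ge2$, ${\rm EX}^\ell(\mathcal G)=\{G\in{\rm EX}^{\ell-1}(\mathcal G): W^\ell(G)\ge W^\ell(G')\ \text{for all } G'\in{\rm EX}^{\ell-1}(\mathcal G)\}$; \item ${\rm EX}^\infty(\mathcal G)=\bigcap_{\ell\ge1}{\rm EX}^\ell(\mathcal G)$. \end{itemize} For odd $\Delta\ge3$ and $n\ge3\Delta+4$, $\mathcal G_{\Delta,n}$ is the set of graphs on $n$ vertices in which every vertex has degree $\Delta$ except exactly one vertex of degree $\Delta-1$, and every connected component has at most $2\Delta$ vertices. $M_m$ denotes a perfect matching on $m$ vertices and $\overline{M_m}$ its complement. $G_1\vee G_2\vee G_3$ is obtained from disjoint $G_1,G_2,G_3$ by joining every vertex of $G_1$ to every vertex of $G_2$ and every vertex of $G_2$ to every vertex of $G_3$; there are no edges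 between $G_1$ and $G_3$. A graph is nearly $(k-1)$-regular if all vertices have degree $k-1$ except exactly one vertex, which has degree $k-2$. For even $k\ge4$ and odd $m\ge k+1$, $\mathcal V_{k,m}$ is the family of nearly $(k-1)$-regular graphs on $m$ vertices in which one component is isomorphic to $K_1\vee\overline{M_{k-2}}\vee K_2$ and every other component has at most $2k-2$ vertices. *)

theory Defs
  imports Main
begin

type_synonym graph = "nat \<Rightarrow> nat \<Rightarrow> bool"

definition is_graph :: "nat \<Rightarrow> graph \<Rightarrow> bool" where
  "is_graph n E \<longleftrightarrow> (\<forall>u v. E u v \<longrightarrow> u < n \<and> v < n \<and> u \<noteq> v \<and> E v u)"

definition deg :: "nat \<Rightarrow> graph \<Rightarrow> nat \<Rightarrow> nat" where
  "deg n E v = card {u. u < n \<and> E v u}"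

definition walks_from :: "nat \<Rightarrow> graph \<Rightarrow> nat \<Rightarrow> nat \<Rightarrow> nat list set" where
  "walks_from n E l u = {xs. length xs = Suc l \<and> xs ! 0 = u \<and> set xs \<subseteq> {..<n}
      \<and> (\<forall>i<l. E (xs ! i) (xs ! Suc i))}"

definition walk_count :: "nat \<Rightarrow> graph \<Rightarrow> nat \<Rightarrow> nat \<Rightarrow> nat" where
  "walk_count n E l u = card (walks_from n E l u)"

definition W :: "nat \<Rightarrow> nat \<Rightarrow> graph \<Rightarrow> nat" where
  "W n l E = (\<Sum>u<n. walk_count n E l u)"

text \<open>EX_ex n 0 F = F; EX_ex n l F = EX^l(F) for l >= 1.\<close>
fun EX_ex :: "nat \<Rightarrow> nat \<Rightarrow> graph set \<Rightarrow> graph set" where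
  "EX_ex n 0 F = F"
| "EX_ex n (Suc l) F =
     {G \<in> EX_ex n l F. \<forall>G' \<in> EX_ex n l F. W n (Suc l) G' \<le> W n (Suc l) G}"

definition EX_inf :: "nat \<Rightarrow> graph set \<Rightarrow> graph set" where
  "EX_inf n F = (\<Inter>l\<in>{1..}. EX_ex n l F)"

definition comp :: "graph \<Rightarrow> nat \<Rightarrow> nat set" where
  "comp E v = {u. E\<^sup>*\<^sup>* v u}"

text \<open>Nearly d-regular (with d = k-1): all degrees d except exactly one of degree d-1.\<close>
definition nearly_regular :: "nat \<Rightarrow> nat \<Rightarrow> graph \<Rightarrow> bool" where
  "nearly_regular n d E \<longleftrightarrow>
     (\<forall>v<n. deg n E v = d \<or> deg n E v = d - 1) \<and> (\<exists>!v. v < n \<and> deg n E v = d - 1)"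

definition GDn :: "nat \<Rightarrow> nat \<Rightarrow> graph set" where
  "GDn \<Delta> n = {E. is_graph n E \<and> nearly_regular n \<Delta> E
                 \<and> (\<forall>v<n. card (comp E v) \<le> 2 * \<Delta>)}"

text \<open>The graph K_1 \/ co-M_{k-2} \/ K_2 on vertices {0..k}: vertex 0 is K_1,
  vertices 1..k-2 carry the complement of the perfect matching {1,2},{3,4},...,
  vertices k-1, k form K_2.\<close>
definition Hk :: "nat \<Rightarrow> graph" where
  "Hk k u v \<longleftrightarrow> u \<le> k \<and> v \<le> k \<and> u \<noteq> v \<and>
     (let mid = (\<lambda>x. 1 \<le> x \<and> x \<le> k - 2); top = (\<lambda>x. k - 1 \<le> x \<and> x \<le> k) in
       (u = 0 \<and> mid v) \<or> (mid u \<and> v = 0)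
     \<or> (mid u \<and> mid v \<and> (u - 1) div 2 \<noteq> (v - 1) div 2)
     \<or> (mid u \<and> top v) \<or> (top u \<and> mid v)
     \<or> (top u \<and> top v))"

definition comp_iso :: "graph \<Rightarrow> nat set \<Rightarrow> graph \<Rightarrow> nat \<Rightarrow> bool" where
  "comp_iso E C H N \<longleftrightarrow> (\<exists>f. bij_betw f C {0..<N} \<and>
      (\<forall>u\<in>C. \<forall>v\<in>C. E u v \<longleftrightarrow> H (f u) (f v)))"

definition Vfam :: "nat \<Rightarrow> nat \<Rightarrow> graph set" where
  "Vfam k m = {E. is_graph m E \<and> nearly_regular m (k - 1) E \<and>
     (\<exists>v<m. comp_iso E (comp E v) (Hk k) (Suc k) \<and>
        (\<forall>u<m. comp E u \<noteq> comp E v \<longrightarrow> card (comp E u) \<le> 2 * k - 2))}"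

end

theory Submission
  imports Defs
begin

text \<open>In a graph of G_(\<Delta>,n) with deficient vertex w, a walk extends in \<Delta> ways unless it ends
  at w, so W_(l+1) = \<Delta> W_l - a_l and a_(l+1) = \<Delta> a_l - c_l, where a_l and c_l count the walks
  and the closed walks of length l starting at w. Maximising W lexicographically therefore means
  maximising c lexicographically. The values c_0, c_1, c_2 are forced; counting the edges between the
  neighbourhood N of w and the rest X of its component (at most 2\<Delta> vertices) and using parity
  gives c_3 \<le> (\<Delta>-1)(\<Delta>-3), with equality only if |X| is 2 or \<Delta>-1, and then c_4 is maximal
  exactly when |X| = 2, which forces the component of w to be K_1 \/ co-M_(\<Delta>-1) \/ K_2. All graphs
  with such a component share the whole sequence c, and an explicit one exists for every odd n \<ge>
  3\<Delta>+4.\<close>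

definition neighbours :: "nat \<Rightarrow> graph \<Rightarrow> nat \<Rightarrow> nat set" where
  "neighbours n E u = {v. v < n \<and> E u v}"

lemma finite_neighbours [simp]: "finite (neighbours n E u)"
  unfolding neighbours_def by auto

lemma neighbours_bounded: "neighbours n E u \<subseteq> {..<n}"
  unfolding neighbours_def by auto

lemma deg_eq_card_neighbours: "deg n E v = card (neighbours n E v)"
  unfolding deg_def neighbours_def by simp

lemma is_graph_sym: "is_graph n E \<Longrightarrow> E u v \<Longrightarrow> E v u"
  and is_graph_irrefl: "is_graph n E \<Longrightarrow> \<not> E u u"
  and is_graph_bounded: "is_graph n E \<Longrightarrow> E u v \<Longrightarrow> u < n \<and> v < n"
  unfolding is_graph_def by blast+

lemma is_graph_sym_iff: "is_graph n E \<Longrightarrow> E u v \<longleftrightarrow> E v u"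
  using is_graph_sym by blast

subsection \<open>Counting walks\<close>

lemma finite_walks_from: "finite (walks_from n E l u)"
proof (rule finite_subset)
  show "walks_from n E l u \<subseteq> {xs. set xs \<subseteq> {..<n} \<and> length xs = Suc l}"
    unfolding walks_from_def by auto
qed (simp add: finite_lists_length_eq)

lemma walks_from_0: "u < n \<Longrightarrow> walks_from n E 0 u = {[u]}"
  unfolding walks_from_def by (auto simp: length_Suc_conv)

lemma walks_from_Suc:
  assumes "u < n"
  shows "walks_from n E (Suc l) u = (\<Union>v\<in>neighbours n E u. (#) u ` walks_from n E l v)"
proof (intro set_eqI iffI)
  fix xs assume xs: "xs \<in> walks_from n E (Suc l) u"
  then obtain ys where ys: "xs = u # ys" "length ys = Suc l"
    unfolding walks_from_def by (cases xs) auto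
  have step: "\<And>i. i < Suc l \<Longrightarrow> E (xs ! i) (xs ! Suc i)"
    using xs unfolding walks_from_def by auto
  have "ys ! 0 \<in> set ys" using ys(2) by (intro nth_mem) simp
  then have "ys ! 0 \<in> neighbours n E u"
    using xs ys step[of 0] unfolding walks_from_def neighbours_def by (auto simp: subset_iff)
  moreover have "ys \<in> walks_from n E l (ys ! 0)"
    using xs ys step[of "Suc _"] unfolding walks_from_def by auto
  ultimately show "xs \<in> (\<Union>v\<in>neighbours n E u. (#) u ` walks_from n E l v)"
    using ys by blast
next
  fix xs assume "xs \<in> (\<Union>v\<in>neighbours n E u. (#) u ` walks_from n E l v)"
  then obtain v ys where v: "v < n" "E u v" and ys: "ys \<in> walks_from n E l v"
    and xs: "xs = u # ys"
    unfolding neighbours_def by auto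
  have "\<forall>i<Suc l. E (xs ! i) (xs ! Suc i)"
  proof (intro allI impI)
    fix i assume "i < Suc l"
    then show "E (xs ! i) (xs ! Suc i)"
      using ys v xs unfolding walks_from_def by (cases i) auto
  qed
  then show "xs \<in> walks_from n E (Suc l) u"
    using ys xs assms unfolding walks_from_def by auto
qed

lemma walk_count_0: "u < n \<Longrightarrow> walk_count n E 0 u = 1"
  unfolding walk_count_def by (simp add: walks_from_0)

lemma walk_count_Suc:
  assumes "u < n"
  shows "walk_count n E (Suc l) u = (\<Sum>v\<in>neighbours n E u. walk_count n E l v)"
proof -
  have "card (\<Union>v\<in>neighbours n E u. (#) u ` walks_from n E l v)
      = (\<Sum>v\<in>neighbours n E u. card ((#) u ` walks_from n E l v))"
    by (rule card_UN_disjoint) (simp, simp add: finite_walks_from, auto simp: walks_from_def)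
  then show ?thesis
    unfolding walk_count_def walks_from_Suc[OF assms] by (simp add: card_image)
qed

lemma W_0: "W n 0 E = n"
  unfolding W_def by (simp add: walk_count_0)

fun walks_between :: "nat \<Rightarrow> graph \<Rightarrow> nat \<Rightarrow> nat \<Rightarrow> nat \<Rightarrow> nat" where
  "walks_between n E 0 u v = (if u = v then 1 else 0)"
| "walks_between n E (Suc l) u v = (\<Sum>x\<in>neighbours n E u. walks_between n E l x v)"

lemma sum_neighbours_swap:
  assumes g: "is_graph n E" and A: "A \<subseteq> {..<n}"
  shows "(\<Sum>x\<in>A. \<Sum>y\<in>neighbours n E x. f y) = (\<Sum>y<n. card (neighbours n E y \<inter> A) * f y)"
proof -
  have fA: "finite A" using A finite_subset by blast
  have "(\<Sum>x\<in>A. \<Sum>y\<in>neighbours n E x. f y) = (\<Sum>x\<in>A. \<Sum>y<n. if E x y then f y else 0)"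
    by (rule sum.cong[OF refl]) (simp add: neighbours_def sum.If_cases Int_def lessThan_def conj_commute)
  also have "\<dots> = (\<Sum>y<n. \<Sum>x\<in>A. if E x y then f y else 0)"
    by (rule sum.swap)
  also have "\<dots> = (\<Sum>y<n. card (neighbours n E y \<inter> A) * f y)"
  proof (rule sum.cong[OF refl])
    fix y assume "y \<in> {..<n}"
    have "{x\<in>A. E x y} = neighbours n E y \<inter> A"
      using A is_graph_sym[OF g] unfolding neighbours_def by blast
    then show "(\<Sum>x\<in>A. if E x y then f y else 0) = card (neighbours n E y \<inter> A) * f y"
      using fA by (simp add: sum.If_cases Int_def)
  qed
  finally show ?thesis .
qed

locale nearly_regular_graph =
  fixes n :: nat and E :: graph and D :: nat and w :: nat
  assumes graph: "is_graph n E" and w_bounded: "w < n" and D_pos: "D \<ge> 1"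
    and deg_w: "deg n E w = D - 1"
    and deg_other: "\<And>v. v < n \<Longrightarrow> v \<noteq> w \<Longrightarrow> deg n E v = D"
begin

lemma card_neighbours_plus_deficit:
  "v < n \<Longrightarrow> card (neighbours n E v) + (if v = w then 1 else 0) = D"
  using deg_w deg_other D_pos deg_eq_card_neighbours by (cases "v = w") auto

text \<open>A walk of length l extends in D ways, except when it ends at w, where it extends in only
  D - 1 ways.\<close>

lemma walk_count_Suc_recurrence:
  "u < n \<Longrightarrow> walk_count n E (Suc l) u + walks_between n E l u w = D * walk_count n E l u"
proof (induction l arbitrary: u)
  case 0
  then show ?case
    using card_neighbours_plus_deficit[of u] by (simp add: walk_count_Suc walk_count_0 neighbours_def)
next
  case (Suc l)
  have "walk_count n E (Suc (Suc l)) u + walks_between n E (Suc l) u w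
      = (\<Sum>v\<in>neighbours n E u. walk_count n E (Suc l) v + walks_between n E l v w)"
    using Suc.prems by (simp add: walk_count_Suc[of u] sum.distrib)
  also have "\<dots> = (\<Sum>v\<in>neighbours n E u. D * walk_count n E l v)"
    by (rule sum.cong[OF refl]) (use Suc.IH neighbours_def in auto)
  also have "\<dots> = D * walk_count n E (Suc l) u"
    using Suc.prems by (simp add: walk_count_Suc sum_distrib_left)
  finally show ?case .
qed

lemma W_Suc_recurrence: "W n (Suc l) E + walk_count n E l w = D * W n l E"
proof -
  have "W n (Suc l) E = (\<Sum>u<n. \<Sum>v\<in>neighbours n E u. walk_count n E l v)"
    unfolding W_def by (rule sum.cong) (auto simp: walk_count_Suc)
  also have "\<dots> = (\<Sum>y<n. card (neighbours n E y) * walk_count n E l y)"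
    using sum_neighbours_swap[OF graph, of "{..<n}"] by (simp add: Int_absorb2 neighbours_bounded)
  finally have "W n (Suc l) E + walk_count n E l w
      = (\<Sum>y<n. card (neighbours n E y) * walk_count n E l y
                 + (if y = w then walk_count n E l y else 0))"
    using w_bounded by (simp add: sum.distrib)
  also have "\<dots> = (\<Sum>y<n. D * walk_count n E l y)"
  proof (rule sum.cong[OF refl])
    fix y assume "y \<in> {..<n}"
    then have "D = card (neighbours n E y) + (if y = w then 1 else 0)"
      by (simp add: card_neighbours_plus_deficit)
    then show "card (neighbours n E y) * walk_count n E l y + (if y = w then walk_count n E l y else 0)
        = D * walk_count n E l y"
      by (simp add: algebra_simps)
  qed
  finally show ?thesis by (simp add: W_def sum_distrib_left)
qed

end

definition deficient_vertex :: "nat \<Rightarrow> nat \<Rightarrow> graph \<Rightarrow> nat" where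
  "deficient_vertex D n E = (THE v. v < n \<and> deg n E v = D - 1)"

lemma nearly_regular_graph_deficient_vertex:
  assumes g: "is_graph n E" and nr: "nearly_regular n D E" and D: "D \<ge> 1"
  shows "nearly_regular_graph n E D (deficient_vertex D n E)"
proof -
  obtain v where v: "v < n \<and> deg n E v = D - 1"
    and uniq: "\<And>u. u < n \<and> deg n E u = D - 1 \<Longrightarrow> u = v"
    using nr unfolding nearly_regular_def by blast
  have w: "deficient_vertex D n E = v"
    unfolding deficient_vertex_def using v uniq by (rule the_equality)
  have "deg n E u = D" if "u < n" "u \<noteq> v" for u
    using nr that uniq[of u] unfolding nearly_regular_def by blast
  then show ?thesis
    using g D v unfolding w by unfold_locales blast+
qed

lemma comp_self: "u \<in> comp E u"
  unfolding comp_def by simp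

lemma comp_closed: "v \<in> comp E u \<Longrightarrow> E v x \<Longrightarrow> x \<in> comp E u"
  unfolding comp_def by (auto intro: rtranclp.rtrancl_into_rtrancl)

lemma neighbours_subset_comp: "v \<in> comp E u \<Longrightarrow> neighbours n E v \<subseteq> comp E u"
  unfolding neighbours_def using comp_closed by blast

lemma comp_subset_closed:
  assumes "u \<in> S" "\<And>x y. x \<in> S \<Longrightarrow> E x y \<Longrightarrow> y \<in> S"
  shows "comp E u \<subseteq> S"
proof
  fix x assume "x \<in> comp E u"
  then have "E\<^sup>*\<^sup>* u x" unfolding comp_def by simp
  then show "x \<in> S" by (induction rule: rtranclp_induct) (use assms in auto)
qed

lemma comp_bounded: "is_graph n E \<Longrightarrow> u < n \<Longrightarrow> comp E u \<subseteq> {..<n}"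
  by (rule comp_subset_closed) (simp_all add: is_graph_bounded)

lemma comp_mono: "E \<le> E' \<Longrightarrow> comp E u \<subseteq> comp E' u"
  unfolding comp_def by (auto intro: rtranclp_mono[THEN predicate2D])

lemma card_neighbours_Int:
  "B \<subseteq> {..<n} \<Longrightarrow> finite B \<Longrightarrow> card (neighbours n E a \<inter> B) = (\<Sum>b\<in>B. if E a b then 1 else 0)"
proof -
  assume "B \<subseteq> {..<n}" "finite B"
  then have "neighbours n E a \<inter> B = {b\<in>B. E a b}" unfolding neighbours_def by auto
  then show ?thesis using \<open>finite B\<close> by (simp add: sum.If_cases Int_def)
qed

lemma edges_between_sym:
  assumes g: "is_graph n E" and A: "A \<subseteq> {..<n}" and B: "B \<subseteq> {..<n}"
  shows "(\<Sum>a\<in>A. card (neighbours n E a \<inter> B)) = (\<Sum>b\<in>B. card (neighbours n E b \<inter> A))"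
proof -
  have fA: "finite A" and fB: "finite B" using A B finite_subset by blast+
  have "(\<Sum>a\<in>A. card (neighbours n E a \<inter> B)) = (\<Sum>a\<in>A. \<Sum>b\<in>B. if E a b then 1 else 0)"
    using card_neighbours_Int[OF B fB] by simp
  also have "\<dots> = (\<Sum>b\<in>B. \<Sum>a\<in>A. if E b a then 1 else 0)"
    by (subst sum.swap) (simp add: is_graph_sym_iff[OF g])
  also have "\<dots> = (\<Sum>b\<in>B. card (neighbours n E b \<inter> A))"
    using card_neighbours_Int[OF A fA] by simp
  finally show ?thesis .
qed

lemma even_sum_inner_degrees:
  assumes g: "is_graph n E" and A: "A \<subseteq> {..<n}"
  shows "even (\<Sum>a\<in>A. card (neighbours n E a \<inter> A))"
proof -
  have "finite A" using A finite_subset by blast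
  then show ?thesis using A
  proof (induction A rule: finite_induct)
    case empty then show ?case by simp
  next
    case (insert a A)
    have grow: "card (neighbours n E x \<inter> insert a A)
        = card (neighbours n E x \<inter> A) + (if E x a then 1 else 0)" if "x \<in> A" for x
      using that insert.hyps insert.prems by (auto simp: neighbours_def Int_insert_right)
    have loop_free: "card (neighbours n E a \<inter> insert a A) = card (neighbours n E a \<inter> A)"
      using is_graph_irrefl[OF g, of a] by (simp add: neighbours_def Int_insert_right)
    have "(\<Sum>x\<in>A. if E x a then 1 else 0) = (\<Sum>x\<in>A. if E a x then 1 else 0)"
      by (simp add: is_graph_sym_iff[OF g])
    also have "\<dots> = card (neighbours n E a \<inter> A)"
      using card_neighbours_Int[where a = a and B = A] insert by simp
    finally have "(\<Sum>x\<in>insert a A. card (neighbours n E x \<inter> insert a A))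
        = (\<Sum>x\<in>A. card (neighbours n E x \<inter> A)) + 2 * card (neighbours n E a \<inter> A)"
      using insert.hyps grow loop_free by (simp add: sum.distrib)
    then show ?case using insert.IH insert.prems by simp
  qed
qed

lemma sum_eq_bound_imp_all_eq:
  fixes f :: "'a \<Rightarrow> nat"
  assumes "finite A" "\<And>a. a \<in> A \<Longrightarrow> f a \<le> K" "sum f A = K * card A" "a \<in> A"
  shows "f a = K"
proof (rule ccontr)
  assume "f a \<noteq> K"
  with assms have "sum f A < sum (\<lambda>_. K) A"
    by (intro sum_strict_mono_ex1) (auto intro: le_neq_implies_less)
  then show False using assms(3) by simp
qed

text \<open>In the application, s = |X| and t is the number of N-X edges, where N is the neighbourhood of
  the deficient vertex w and X the rest of its component; SN and SX are the degree sums inside N and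
  inside X, hence even.\<close>

lemma edge_count_arith:
  fixes D s t SN SX :: nat
  assumes "odd D" "D \<ge> 3" "SN + t = (D-1)*(D-1)" "SX + t = D * s" "SX \<le> s * (s - 1)"
    "even SN" "even SX" "t \<ge> D - 1" "s \<le> D"
  shows "t \<ge> 2 * (D - 1)"
    and "t = 2 * (D - 1) \<Longrightarrow> (s = 2 \<or> s = D - 1) \<and> SX = s * (s - 1)"
proof -
  obtain e where e: "D = 2 * e + 3"
  proof -
    obtain e0 where "D = 2 * e0 + 1" using assms(1) oddE by blast
    with assms(2) show ?thesis using that[of "e0 - 1"] by simp
  qed
  have "even ((D-1)*(D-1))" using e by simp
  then have "even t" using assms(3,6) by (metis even_add)
  then have "even s" using assms(1,4,7) by (metis even_add even_mult_iff)
  moreover have "s \<noteq> 0"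
  proof
    assume "s = 0"
    then show False using assms(4,8) e by simp
  qed
  ultimately have "s \<ge> 2" by presburger
  then obtain a where a: "s = 2 + a" using le_Suc_ex by blast
  have "s \<noteq> D" using \<open>even s\<close> assms(1) by auto
  then have "s \<le> D - 1" using assms(9) by simp
  then obtain b where b: "D - 1 = s + b" using le_Suc_ex by blast
  have D: "D = 3 + a + b" using a b e by simp
  have "D * s - (2 + a) * (1 + a) = 2 * (D - 1) + a * b"
    unfolding D a by (simp add: algebra_simps)
  moreover have "SX \<le> (2 + a) * (1 + a)" using assms(5) a by simp
  ultimately have main: "t \<ge> 2 * (D - 1) + a * b" using assms(4) by linarith
  then show "t \<ge> 2 * (D - 1)" by simp
  assume "t = 2 * (D - 1)"
  then have "a = 0 \<or> b = 0" using main by simp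
  then show "(s = 2 \<or> s = D - 1) \<and> SX = s * (s - 1)"
  proof
    assume "a = 0"
    then show ?thesis using a D \<open>t = 2 * (D - 1)\<close> assms(4) by (simp add: algebra_simps)
  next
    assume "b = 0"
    then show ?thesis using a D \<open>t = 2 * (D - 1)\<close> assms(4) by (simp add: algebra_simps)
  qed
qed

lemma card_insert_Un_disjoint:
  "finite A \<Longrightarrow> finite B \<Longrightarrow> A \<inter> B = {} \<Longrightarrow> a \<notin> A \<union> B
    \<Longrightarrow> card (insert a (A \<union> B)) = Suc (card A + card B)"
  by (simp add: card_Un_disjoint)

lemma involution_remove_pair:
  assumes inv: "\<And>u. u \<in> S \<Longrightarrow> p u \<in> S \<and> p u \<noteq> u \<and> p (p u) = u"
    and "a \<in> S" "u \<in> S - {a, p a}"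
  shows "p u \<in> S - {a, p a} \<and> p u \<noteq> u \<and> p (p u) = u"
proof -
  have "p u \<in> S" "p u \<noteq> u" "p (p u) = u" "p (p a) = a" using assms inv by auto
  moreover have "u \<noteq> a" "u \<noteq> p a" using assms(3) by auto
  ultimately have "p u \<noteq> a" "p u \<noteq> p a" by metis+
  with \<open>p u \<in> S\<close> \<open>p u \<noteq> u\<close> \<open>p (p u) = u\<close> show ?thesis by auto
qed

lemma numbering_add_pair:
  assumes g: "bij_betw g S {0..<m}" and "a \<notin> S" "b \<notin> S" "a \<noteq> b"
  shows "bij_betw (\<lambda>u. if u \<in> S then g u else if u = a then m else Suc m)
    (S \<union> {a, b}) {0..<Suc (Suc m)}"
proof -
  have "bij_betw (\<lambda>u. if u = a then m else Suc m) {a, b} {m, Suc m}"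
    using assms(4) unfolding bij_betw_def by auto
  then have "bij_betw (\<lambda>u. if u \<in> S then g u else if u = a then m else Suc m)
      (S \<union> {a, b}) ({0..<m} \<union> {m, Suc m})"
    using g assms(2,3) by (intro bij_betw_disjoint_Un) auto
  moreover have "{0..<m} \<union> {m, Suc m} = {0..<Suc (Suc m)}" by auto
  ultimately show ?thesis by simp
qed

lemma involution_pair_numbering:
  assumes "finite S" "\<And>u. u \<in> S \<Longrightarrow> p u \<in> S \<and> p u \<noteq> u \<and> p (p u) = u"
  shows "even (card S) \<and> (\<exists>g. bij_betw g S {0..<card S} \<and> (\<forall>u\<in>S. g (p u) div 2 = g u div 2))"
  using assms
proof (induction "card S" arbitrary: S rule: less_induct)
  case less
  show ?case
  proof (cases "S = {}")
    case True
    then show ?thesis by (auto simp: bij_betw_def)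
  next
    case False
    then obtain a where a: "a \<in> S" by blast
    have pa: "p a \<in> S" "p a \<noteq> a" "p (p a) = a" using less.prems(2)[OF a] by auto
    define S' where "S' = S - {a, p a}"
    have S: "S = S' \<union> {a, p a}" and "a \<notin> S'" "p a \<notin> S'"
      using a pa unfolding S'_def by blast+
    have card_S: "card S = Suc (Suc (card S'))"
      using less.prems(1) pa unfolding S by (simp add: S'_def)
    have "card S' < card S" "finite S'" using card_S less.prems(1) unfolding S'_def by auto
    from less.hyps[OF this] obtain g' where
      even_S': "even (card S')" and g': "bij_betw g' S' {0..<card S'}"
      and g'_pairs: "\<forall>u\<in>S'. g' (p u) div 2 = g' u div 2"
      using involution_remove_pair[OF less.prems(2) a] unfolding S'_def by blast
    define g where "g u = (if u \<in> S' then g' u else if u = a then card S' else Suc (card S'))" for u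
    have "bij_betw g (S' \<union> {a, p a}) {0..<Suc (Suc (card S'))}"
      unfolding g_def by (rule numbering_add_pair[OF g']) (use \<open>a \<notin> S'\<close> \<open>p a \<notin> S'\<close> pa in auto)
    then have "bij_betw g S {0..<card S}" using S card_S by simp
    moreover have "g (p u) div 2 = g u div 2" if "u \<in> S" for u
    proof (cases "u \<in> S'")
      case True
      then show ?thesis
        using g'_pairs involution_remove_pair[OF less.prems(2) a] unfolding g_def S'_def by auto
    next
      case False
      then have "u = a \<or> u = p a" using that unfolding S'_def by blast
      then show ?thesis using pa even_S' \<open>a \<notin> S'\<close> \<open>p a \<notin> S'\<close> unfolding g_def by auto
    qed
    ultimately show ?thesis using even_S' card_S by auto
  qed
qed

lemma div2_eq_three: "(x::nat) div 2 = y div 2 \<Longrightarrow> x div 2 = z div 2 \<Longrightarrow> x = y \<or> x = z \<or> y = z"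
  by linarith

lemma involution_numbering:
  assumes "finite S" "\<And>u. u \<in> S \<Longrightarrow> p u \<in> S \<and> p u \<noteq> u \<and> p (p u) = u"
  obtains g where "bij_betw g S {0..<card S}"
    and "\<And>u v. u \<in> S \<Longrightarrow> v \<in> S \<Longrightarrow> g u div 2 = g v div 2 \<longleftrightarrow> v = u \<or> v = p u"
proof -
  obtain g where g: "bij_betw g S {0..<card S}" and pairs: "\<forall>u\<in>S. g (p u) div 2 = g u div 2"
    using involution_pair_numbering[OF assms] by blast
  have "g u div 2 = g v div 2 \<longleftrightarrow> v = u \<or> v = p u" if "u \<in> S" "v \<in> S" for u v
  proof
    assume "g u div 2 = g v div 2"
    then have "g u = g v \<or> g u = g (p u) \<or> g v = g (p u)"
      using pairs that div2_eq_three[of "g u" "g v" "g (p u)"] by simp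
    then show "v = u \<or> v = p u"
      using g that assms(2)[OF that(1)] unfolding bij_betw_def inj_on_def by metis
  qed (use pairs that in auto)
  then show ?thesis using g that by blast
qed

subsection \<open>The graph K_1 \/ co-M_(D-1) \/ K_2\<close>

lemma Hk_iff: "Hk (D+1) a b \<longleftrightarrow> a \<le> D+1 \<and> b \<le> D+1 \<and> a \<noteq> b \<and>
   ((a = 0 \<and> 1 \<le> b \<and> b \<le> D - 1) \<or> (1 \<le> a \<and> a \<le> D - 1 \<and> b = 0)
   \<or> (1 \<le> a \<and> a \<le> D - 1 \<and> 1 \<le> b \<and> b \<le> D - 1 \<and> (a - 1) div 2 \<noteq> (b - 1) div 2)
   \<or> (1 \<le> a \<and> a \<le> D - 1 \<and> D \<le> b \<and> b \<le> D + 1)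
   \<or> (D \<le> a \<and> a \<le> D + 1 \<and> 1 \<le> b \<and> b \<le> D - 1)
   \<or> (D \<le> a \<and> a \<le> D + 1 \<and> D \<le> b \<and> b \<le> D + 1))"
  unfolding Hk_def Let_def by simp

lemma Hk_irrefl: "\<not> Hk k a a"
  unfolding Hk_def by simp

lemma Hk_out_of_range: "b > D + 1 \<Longrightarrow> \<not> Hk (D+1) a b \<and> \<not> Hk (D+1) b a"
  unfolding Hk_def by auto

lemma is_graph_Hk: "is_graph (Suc (D+1)) (Hk (D+1))"
  unfolding is_graph_def Hk_def Let_def by auto

lemma Hk_top_top: "Hk (D+1) D (D+1) \<and> Hk (D+1) (D+1) D"
  unfolding Hk_iff by simp

context
  fixes D :: nat
  assumes D_ge_3: "D \<ge> 3"
begin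

lemma Hk_mid_mid: "1 \<le> a \<Longrightarrow> a \<le> D - 1 \<Longrightarrow> 1 \<le> b \<Longrightarrow> b \<le> D - 1 \<Longrightarrow>
   Hk (D+1) a b \<longleftrightarrow> a \<noteq> b \<and> (a - 1) div 2 \<noteq> (b - 1) div 2"
  unfolding Hk_iff using D_ge_3 by auto

lemma Hk_apex_mid: "1 \<le> b \<Longrightarrow> b \<le> D - 1 \<Longrightarrow> Hk (D+1) 0 b \<and> Hk (D+1) b 0"
  unfolding Hk_iff using D_ge_3 by auto

lemma Hk_apex_top: "b = D \<or> b = D + 1 \<Longrightarrow> \<not> Hk (D+1) 0 b \<and> \<not> Hk (D+1) b 0"
  unfolding Hk_iff using D_ge_3 by auto

lemma Hk_mid_top: "1 \<le> a \<Longrightarrow> a \<le> D - 1 \<Longrightarrow> b = D \<or> b = D + 1 \<Longrightarrow> Hk (D+1) a b \<and> Hk (D+1) b a"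
  unfolding Hk_iff using D_ge_3 by auto

end

text \<open>The number of closed 4-walks at the apex of K_1 \/ co-M_(D-1) \/ K_2: such walks are counted by
  the sum of the squared numbers of common neighbours with the apex, which are D - 1 at the apex and
  the two top vertices and D - 3 at the D - 1 middle vertices.\<close>

definition closed4_max :: "nat \<Rightarrow> nat" where
  "closed4_max D = (D-1)*(D-1) + (D-1)*((D-3)*(D-3)) + 2*((D-1)*(D-1))"

subsection \<open>The component of the deficient vertex\<close>

locale deficient_component = nearly_regular_graph +
  assumes D_odd: "odd D" and D_ge_3: "D \<ge> 3" and card_comp_w: "card (comp E w) \<le> 2 * D"
begin

definition "Nw = neighbours n E w"
definition "Cw = comp E w"
definition "Xw = Cw - insert w Nw"
definition "codeg y = card (neighbours n E y \<inter> Nw)"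
definition "edges_NX = (\<Sum>x\<in>Xw. codeg x)"

lemma Cw_bounded: "Cw \<subseteq> {..<n}"
  unfolding Cw_def using comp_bounded[OF graph w_bounded] .

lemma neighbours_subset_Cw: "u \<in> Cw \<Longrightarrow> neighbours n E u \<subseteq> Cw"
  unfolding Cw_def by (rule neighbours_subset_comp)

lemma Nw_subset_Cw: "Nw \<subseteq> Cw"
  unfolding Nw_def Cw_def by (rule neighbours_subset_comp[OF comp_self])

lemma Cw_decomp: "Cw = insert w (Nw \<union> Xw)"
  and Nw_Xw_disjoint: "Nw \<inter> Xw = {}"
  and w_notin_Xw: "w \<notin> Xw"
  using comp_self[of w E] Nw_subset_Cw unfolding Xw_def Cw_def by blast+

lemma w_notin_Nw: "w \<notin> Nw"
  unfolding Nw_def neighbours_def using is_graph_irrefl[OF graph] by blast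

lemma card_Nw: "card Nw = D - 1"
  unfolding Nw_def using deg_w deg_eq_card_neighbours by simp

lemma Nw_bounded: "Nw \<subseteq> {..<n}" and Xw_bounded: "Xw \<subseteq> {..<n}"
  using Cw_bounded Cw_decomp by blast+

lemma finite_Cw: "finite Cw" and finite_Nw: "finite Nw" and finite_Xw: "finite Xw"
  using Cw_bounded Nw_bounded Xw_bounded finite_subset by blast+

lemma card_Cw: "card Cw = D + card Xw"
  using Cw_decomp Nw_Xw_disjoint w_notin_Nw w_notin_Xw finite_Nw finite_Xw card_Nw D_ge_3
  by (simp add: card_Un_disjoint)

lemma card_Xw_le: "card Xw \<le> D"
  using card_Cw card_comp_w unfolding Cw_def by simp

lemma in_Nw_iff: "y < n \<Longrightarrow> y \<in> Nw \<longleftrightarrow> E y w"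
  unfolding Nw_def neighbours_def using is_graph_sym_iff[OF graph] w_bounded by blast

lemma degree_split_Nw:
  assumes u: "u \<in> Nw"
  shows "1 + codeg u + card (neighbours n E u \<inter> Xw) = D"
proof -
  have "neighbours n E u \<subseteq> Cw"
    using u Nw_subset_Cw neighbours_subset_Cw by blast
  moreover have "w \<in> neighbours n E u"
    using u in_Nw_iff Nw_bounded w_bounded unfolding neighbours_def by auto
  ultimately have "neighbours n E u = insert w ((neighbours n E u \<inter> Nw) \<union> (neighbours n E u \<inter> Xw))"
    using Cw_decomp by blast
  then have "card (neighbours n E u)
      = card (insert w ((neighbours n E u \<inter> Nw) \<union> (neighbours n E u \<inter> Xw)))"
    by (rule arg_cong)
  also have "\<dots> = Suc (codeg u + card (neighbours n E u \<inter> Xw))"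
    unfolding codeg_def
    by (rule card_insert_Un_disjoint) (use w_notin_Nw w_notin_Xw Nw_Xw_disjoint in auto)
  finally have "card (neighbours n E u) = Suc (codeg u + card (neighbours n E u \<inter> Xw))" .
  moreover have "card (neighbours n E u) = D"
    using deg_other[of u] u Nw_bounded w_notin_Nw deg_eq_card_neighbours by auto
  ultimately show ?thesis by simp
qed

lemma degree_split_Xw:
  assumes x: "x \<in> Xw"
  shows "codeg x + card (neighbours n E x \<inter> Xw) = D"
proof -
  have x_bounded: "x < n" using x Xw_bounded by auto
  have "w \<notin> neighbours n E x"
    using x Nw_Xw_disjoint in_Nw_iff[OF x_bounded] unfolding neighbours_def by blast
  moreover have "neighbours n E x \<subseteq> Cw"
    using x Cw_decomp neighbours_subset_Cw by blast
  ultimately have "neighbours n E x = (neighbours n E x \<inter> Nw) \<union> (neighbours n E x \<inter> Xw)"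
    using Cw_decomp by auto
  then have "card (neighbours n E x) = card ((neighbours n E x \<inter> Nw) \<union> (neighbours n E x \<inter> Xw))"
    by (rule arg_cong)
  also have "\<dots> = codeg x + card (neighbours n E x \<inter> Xw)"
    unfolding codeg_def by (rule card_Un_disjoint) (use Nw_Xw_disjoint in auto)
  finally have "card (neighbours n E x) = codeg x + card (neighbours n E x \<inter> Xw)" .
  moreover have "card (neighbours n E x) = D"
    using deg_other x_bounded x w_notin_Xw deg_eq_card_neighbours by auto
  ultimately show ?thesis by simp
qed

lemma codeg_Nw_le: "u \<in> Nw \<Longrightarrow> codeg u \<le> D - 2"
proof -
  assume u: "u \<in> Nw"
  have "neighbours n E u \<inter> Nw \<subseteq> Nw - {u}"
    using is_graph_irrefl[OF graph] unfolding neighbours_def by auto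
  then have "codeg u \<le> card (Nw - {u})"
    unfolding codeg_def using finite_Nw by (intro card_mono) auto
  then show ?thesis using card_Nw u finite_Nw by simp
qed

lemma inner_degree_Xw_le: "x \<in> Xw \<Longrightarrow> card (neighbours n E x \<inter> Xw) \<le> card Xw - 1"
proof -
  assume x: "x \<in> Xw"
  have "neighbours n E x \<inter> Xw \<subseteq> Xw - {x}"
    using is_graph_irrefl[OF graph] unfolding neighbours_def by auto
  then have "card (neighbours n E x \<inter> Xw) \<le> card (Xw - {x})"
    using finite_Xw by (intro card_mono) auto
  then show ?thesis using x finite_Xw by simp
qed

lemma codeg_outside_Cw: "y < n \<Longrightarrow> y \<notin> Cw \<Longrightarrow> codeg y = 0"
  unfolding codeg_def Cw_def using Nw_subset_Cw is_graph_sym[OF graph]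
  by (auto simp: neighbours_def Cw_def dest: comp_closed)

lemma codeg_w: "codeg w = D - 1"
  unfolding codeg_def using card_Nw Nw_def by simp

lemma walks_between_1_w: "y < n \<Longrightarrow> walks_between n E 1 y w = (if y \<in> Nw then 1 else 0)"
  using in_Nw_iff[of y] w_bounded by (simp add: sum.delta neighbours_def)

lemma walks_between_2_w: "y < n \<Longrightarrow> walks_between n E 2 y w = codeg y"
proof -
  assume "y < n"
  have "walks_between n E 2 y w = (\<Sum>z\<in>neighbours n E y. walks_between n E 1 z w)"
    by (simp add: numeral_2_eq_2)
  also have "\<dots> = (\<Sum>z\<in>neighbours n E y. if z \<in> Nw then 1 else 0)"
    by (rule sum.cong[OF refl], rule walks_between_1_w) (simp add: neighbours_def)
  also have "\<dots> = codeg y" unfolding codeg_def by (simp add: sum.If_cases Int_def)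
  finally show ?thesis .
qed

lemma closed_walks_1: "walks_between n E 1 w w = 0"
  using walks_between_1_w[OF w_bounded] w_notin_Nw by simp

lemma closed_walks_2: "walks_between n E 2 w w = D - 1"
  using walks_between_2_w[OF w_bounded] codeg_w by simp

lemma closed_walks_3: "walks_between n E 3 w w = (\<Sum>x\<in>Nw. codeg x)"
proof -
  have "walks_between n E 3 w w = (\<Sum>x\<in>Nw. walks_between n E 2 x w)"
    by (simp add: numeral_3_eq_3 numeral_2_eq_2 Nw_def)
  also have "\<dots> = (\<Sum>x\<in>Nw. codeg x)"
    using Nw_bounded walks_between_2_w by (intro sum.cong) auto
  finally show ?thesis .
qed

lemma closed_walks_4: "walks_between n E 4 w w = (\<Sum>y<n. codeg y * codeg y)"
proof -
  have "walks_between n E 4 w w = (\<Sum>x\<in>Nw. \<Sum>y\<in>neighbours n E x. walks_between n E 2 y w)"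
    by (simp add: Nw_def numeral_eq_Suc)
  also have "\<dots> = (\<Sum>x\<in>Nw. \<Sum>y\<in>neighbours n E x. codeg y)"
    by (intro sum.cong refl) (auto simp: walks_between_2_w neighbours_def)
  also have "\<dots> = (\<Sum>y<n. codeg y * codeg y)"
    unfolding sum_neighbours_swap[OF graph Nw_bounded] codeg_def ..
  finally show ?thesis .
qed

lemma closed_walks_4_split:
  "walks_between n E 4 w w = (D-1)*(D-1) + (\<Sum>x\<in>Nw. codeg x * codeg x) + (\<Sum>x\<in>Xw. codeg x * codeg x)"
proof -
  have "(\<Sum>y<n. codeg y * codeg y) = (\<Sum>y\<in>Cw. codeg y * codeg y)"
    by (rule sum.mono_neutral_right) (use Cw_bounded codeg_outside_Cw in auto)
  also have "\<dots> = codeg w * codeg w + (\<Sum>y\<in>Nw \<union> Xw. codeg y * codeg y)"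
    using Cw_decomp finite_Nw finite_Xw w_notin_Nw w_notin_Xw by simp
  finally show ?thesis
    using Nw_Xw_disjoint finite_Nw finite_Xw codeg_w closed_walks_4
    by (simp add: sum.union_disjoint)
qed

lemma edges_NX_alt: "edges_NX = (\<Sum>u\<in>Nw. card (neighbours n E u \<inter> Xw))"
  unfolding edges_NX_def codeg_def using edges_between_sym[OF graph Nw_bounded Xw_bounded] by simp

lemma sum_codeg_Nw: "(\<Sum>x\<in>Nw. codeg x) + edges_NX = (D-1)*(D-1)"
proof -
  have "(\<Sum>x\<in>Nw. codeg x) + edges_NX = (\<Sum>u\<in>Nw. codeg u + card (neighbours n E u \<inter> Xw))"
    by (simp add: edges_NX_alt sum.distrib)
  also have "\<dots> = (\<Sum>u\<in>Nw. D - 1)"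
    by (rule sum.cong) (use degree_split_Nw in force)+
  finally show ?thesis using card_Nw by simp
qed

lemma sum_inner_degree_Xw: "(\<Sum>x\<in>Xw. card (neighbours n E x \<inter> Xw)) + edges_NX = D * card Xw"
proof -
  have "(\<Sum>x\<in>Xw. card (neighbours n E x \<inter> Xw)) + edges_NX
      = (\<Sum>x\<in>Xw. codeg x + card (neighbours n E x \<inter> Xw))"
    by (simp add: edges_NX_def sum.distrib)
  also have "\<dots> = (\<Sum>x\<in>Xw. D)"
    by (rule sum.cong) (use degree_split_Xw in force)+
  finally show ?thesis by (simp add: mult.commute)
qed

lemma edges_NX_ge: "edges_NX \<ge> D - 1"
proof -
  have "(\<Sum>u\<in>Nw. 1) \<le> (\<Sum>u\<in>Nw. card (neighbours n E u \<inter> Xw))"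
  proof (rule sum_mono)
    fix u assume u: "u \<in> Nw"
    show "1 \<le> card (neighbours n E u \<inter> Xw)"
      using degree_split_Nw[OF u] codeg_Nw_le[OF u] D_ge_3 by simp
  qed
  then show ?thesis using card_Nw edges_NX_alt by simp
qed

lemma edges_NX_bounds:
  shows "edges_NX \<ge> 2 * (D - 1)"
    and "edges_NX = 2 * (D - 1) \<Longrightarrow> (card Xw = 2 \<or> card Xw = D - 1) \<and>
      (\<Sum>x\<in>Xw. card (neighbours n E x \<inter> Xw)) = card Xw * (card Xw - 1)"
proof -
  have "(\<Sum>x\<in>Xw. card (neighbours n E x \<inter> Xw)) \<le> (\<Sum>x\<in>Xw. card Xw - 1)"
    by (rule sum_mono) (rule inner_degree_Xw_le)
  then have inner_le: "(\<Sum>x\<in>Xw. card (neighbours n E x \<inter> Xw)) \<le> card Xw * (card Xw - 1)"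
    by simp
  note arith = edge_count_arith[OF D_odd D_ge_3 sum_codeg_Nw sum_inner_degree_Xw inner_le
      even_sum_inner_degrees[OF graph Nw_bounded, folded codeg_def]
      even_sum_inner_degrees[OF graph Xw_bounded] edges_NX_ge card_Xw_le]
  show "edges_NX \<ge> 2 * (D - 1)" by (rule arith(1))
  show "edges_NX = 2 * (D - 1) \<Longrightarrow> (card Xw = 2 \<or> card Xw = D - 1) \<and>
      (\<Sum>x\<in>Xw. card (neighbours n E x \<inter> Xw)) = card Xw * (card Xw - 1)"
    by (rule arith(2))
qed

lemma closed_walks_3_plus_edges_NX:
  "walks_between n E 3 w w + edges_NX = (D-1)*(D-3) + 2 * (D-1)"
proof -
  obtain a where "D = 3 + a" using D_ge_3 le_Suc_ex by blast
  then show ?thesis using closed_walks_3 sum_codeg_Nw by (simp add: algebra_simps)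
qed

lemma closed_walks_3_le: "walks_between n E 3 w w \<le> (D-1)*(D-3)"
  using closed_walks_3_plus_edges_NX edges_NX_bounds(1) by linarith

lemma closed_walks_3_eq_iff: "walks_between n E 3 w w = (D-1)*(D-3) \<longleftrightarrow> edges_NX = 2 * (D - 1)"
  using closed_walks_3_plus_edges_NX by linarith

lemma codeg_Xw_extremal:
  assumes "edges_NX = 2 * (D - 1)" "x \<in> Xw"
  shows "card (neighbours n E x \<inter> Xw) = card Xw - 1" and "codeg x = D + 1 - card Xw"
proof -
  have "(\<Sum>x\<in>Xw. card (neighbours n E x \<inter> Xw)) = (card Xw - 1) * card Xw"
    using edges_NX_bounds(2)[OF assms(1)] by (simp add: mult.commute)
  then show inner: "card (neighbours n E x \<inter> Xw) = card Xw - 1"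
    using sum_eq_bound_imp_all_eq[where f = "\<lambda>x. card (neighbours n E x \<inter> Xw)"]
      finite_Xw inner_degree_Xw_le assms(2) by blast
  have "card Xw \<ge> 1" using assms(2) finite_Xw card_0_eq by fastforce
  then show "codeg x = D + 1 - card Xw" using degree_split_Xw[OF assms(2)] inner by simp
qed

lemma extremal_card_Xw_2:
  assumes t: "edges_NX = 2 * (D - 1)" and s: "card Xw = 2"
  shows "\<forall>x\<in>Xw. codeg x = D - 1" and "\<forall>u\<in>Nw. codeg u = D - 3"
    and "walks_between n E 4 w w = closed4_max D"
proof -
  show codeg_X: "\<forall>x\<in>Xw. codeg x = D - 1" using codeg_Xw_extremal(2)[OF t] s by simp
  have le: "\<And>u. u \<in> Nw \<Longrightarrow> card (neighbours n E u \<inter> Xw) \<le> 2"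
    using s finite_Xw by (metis card_mono inf_le2)
  have "(\<Sum>u\<in>Nw. card (neighbours n E u \<inter> Xw)) = 2 * card Nw"
    using t edges_NX_alt card_Nw by simp
  then have "\<And>u. u \<in> Nw \<Longrightarrow> card (neighbours n E u \<inter> Xw) = 2"
    using sum_eq_bound_imp_all_eq[where f = "\<lambda>u. card (neighbours n E u \<inter> Xw)"]
      finite_Nw le by blast
  then show codeg_N: "\<forall>u\<in>Nw. codeg u = D - 3" using degree_split_Nw by fastforce
  show "walks_between n E 4 w w = closed4_max D"
    using closed_walks_4_split codeg_N codeg_X card_Nw s unfolding closed4_max_def by simp
qed

lemma extremal_card_Xw_large:
  assumes t: "edges_NX = 2 * (D - 1)" and s: "card Xw = D - 1" and s2: "card Xw \<noteq> 2"
  shows "walks_between n E 4 w w < closed4_max D"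
proof -
  have "D \<ge> 5" using s s2 D_ge_3 D_odd by presburger
  then obtain a where a: "D = 5 + a" using le_Suc_ex by blast
  have codeg_X: "\<forall>x\<in>Xw. codeg x = 2" using codeg_Xw_extremal(2)[OF t] s D_ge_3 by simp
  have sum_N: "(\<Sum>x\<in>Nw. codeg x) = (D-1)*(D-3)"
    using sum_codeg_Nw t a by (simp add: algebra_simps)
  have "(\<Sum>x\<in>Nw. codeg x * codeg x) \<le> (\<Sum>x\<in>Nw. (D-2) * codeg x)"
    by (rule sum_mono) (use codeg_Nw_le in simp)
  also have "\<dots> = (D-2)*((D-1)*(D-3))" using sum_N by (simp add: sum_distrib_left[symmetric])
  finally have "(\<Sum>x\<in>Nw. codeg x * codeg x) \<le> (D-2)*((D-1)*(D-3))" .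
  moreover have "(\<Sum>x\<in>Xw. codeg x * codeg x) = 4*(D-1)" using codeg_X s by simp
  moreover have "(D-1)*(D-1) + (D-2)*((D-1)*(D-3)) + 4*(D-1) + (D-1)*(D-3) = closed4_max D"
    unfolding closed4_max_def by (simp add: a algebra_simps)
  moreover have "(D-1)*(D-3) > 0" using a by simp
  ultimately show ?thesis using closed_walks_4_split by linarith
qed

lemma closed_walks_4_le:
  "walks_between n E 3 w w = (D-1)*(D-3) \<Longrightarrow> walks_between n E 4 w w \<le> closed4_max D"
  using closed_walks_3_eq_iff edges_NX_bounds(2) extremal_card_Xw_2 extremal_card_Xw_large
  by (metis less_imp_le_nat order_refl)

lemma closed_walks_4_eq_imp_card_Xw:
  "walks_between n E 3 w w = (D-1)*(D-3) \<Longrightarrow> walks_between n E 4 w w = closed4_max D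
    \<Longrightarrow> card Xw = 2"
  using closed_walks_3_eq_iff edges_NX_bounds(2) extremal_card_Xw_large by (metis less_irrefl)

lemma Nw_complement_of_matching:
  assumes codeg_N: "\<forall>u\<in>Nw. codeg u = D - 3"
  obtains p where "\<And>u. u \<in> Nw \<Longrightarrow> p u \<in> Nw \<and> p u \<noteq> u \<and> p (p u) = u"
    and "\<And>u v. u \<in> Nw \<Longrightarrow> v \<in> Nw \<Longrightarrow> E u v \<longleftrightarrow> v \<noteq> u \<and> v \<noteq> p u"
proof -
  define R where "R u = (Nw - {u}) - neighbours n E u" for u
  have card_R: "card (R u) = 1" if u: "u \<in> Nw" for u
  proof -
    have "(Nw - {u}) \<inter> neighbours n E u = neighbours n E u \<inter> Nw"
      using is_graph_irrefl[OF graph] unfolding neighbours_def by auto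
    then have "card (R u) = card (Nw - {u}) - codeg u"
      unfolding R_def codeg_def by (simp add: card_Diff_subset_Int finite_Nw)
    then show ?thesis using codeg_N u card_Nw finite_Nw D_ge_3 by simp
  qed
  define p where "p u = the_elem (R u)" for u
  have R: "R u = {p u}" if "u \<in> Nw" for u
    using card_R[OF that] unfolding p_def by (metis card_1_singletonE the_elem_eq)
  have adj: "E u v \<longleftrightarrow> v \<noteq> u \<and> v \<noteq> p u" if "u \<in> Nw" "v \<in> Nw" for u v
  proof -
    have "v < n" using that Nw_bounded by auto
    then have "v \<in> R u \<longleftrightarrow> v \<noteq> u \<and> \<not> E u v" using that(2) unfolding R_def neighbours_def by auto
    then show ?thesis using R[OF that(1)] is_graph_irrefl[OF graph] by auto
  qed
  have "p u \<in> Nw \<and> p u \<noteq> u \<and> p (p u) = u" if u: "u \<in> Nw" for u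
  proof -
    have pu: "p u \<in> Nw" "p u \<noteq> u" using R[OF u] unfolding R_def by auto
    have "\<not> E (p u) u" using adj[OF u pu(1)] is_graph_sym[OF graph] by blast
    then show ?thesis using adj[OF pu(1) u] pu by auto
  qed
  with adj show ?thesis using that by blast
qed

lemma Nw_numbering:
  assumes "\<forall>u\<in>Nw. codeg u = D - 3"
  obtains g where "bij_betw g Nw {0..<D-1}"
    and "\<And>u v. u \<in> Nw \<Longrightarrow> v \<in> Nw \<Longrightarrow> E u v \<longleftrightarrow> g u div 2 \<noteq> g v div 2"
proof -
  obtain p where p: "\<And>u. u \<in> Nw \<Longrightarrow> p u \<in> Nw \<and> p u \<noteq> u \<and> p (p u) = u"
    and adj: "\<And>u v. u \<in> Nw \<Longrightarrow> v \<in> Nw \<Longrightarrow> E u v \<longleftrightarrow> v \<noteq> u \<and> v \<noteq> p u"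
    using Nw_complement_of_matching[OF assms] by blast
  obtain g where "bij_betw g Nw {0..<card Nw}"
    and "\<And>u v. u \<in> Nw \<Longrightarrow> v \<in> Nw \<Longrightarrow> g u div 2 = g v div 2 \<longleftrightarrow> v = u \<or> v = p u"
    using involution_numbering[OF finite_Nw p] by blast
  then show ?thesis using that adj card_Nw by simp
qed

lemma w_adj_iff: "v < n \<Longrightarrow> E w v \<longleftrightarrow> v \<in> Nw"
  using in_Nw_iff is_graph_sym_iff[OF graph] by blast

lemma Xw_adj_Nw:
  assumes "x \<in> Xw" "codeg x = D - 1" "u \<in> Nw"
  shows "E u x"
proof -
  have "neighbours n E x \<inter> Nw = Nw"
    using assms(2) card_Nw finite_Nw unfolding codeg_def by (metis card_subset_eq inf_le2)
  then show ?thesis using assms(3) is_graph_sym[OF graph] unfolding neighbours_def by blast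
qed

lemma Xw_pair_adj:
  assumes "card Xw = 2" "\<forall>x\<in>Xw. card (neighbours n E x \<inter> Xw) = 1" "x \<in> Xw" "y \<in> Xw"
  shows "E x y \<longleftrightarrow> x \<noteq> y"
proof -
  have "neighbours n E x \<inter> Xw \<subseteq> Xw - {x}"
    using is_graph_irrefl[OF graph] unfolding neighbours_def by auto
  moreover have "card (Xw - {x}) = 1" using assms(1,3) finite_Xw by simp
  ultimately have "neighbours n E x \<inter> Xw = Xw - {x}"
    using assms(2,3) finite_Xw by (metis card_subset_eq finite_Diff)
  then show ?thesis using assms(4) Xw_bounded is_graph_irrefl[OF graph] unfolding neighbours_def
    by blast
qed

lemma Cw_labelling:
  assumes card_X: "card Xw = 2" and codeg_N: "\<forall>u\<in>Nw. codeg u = D - 3"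
  obtains f where "bij_betw f Cw {0..<Suc (D+1)}" "f w = 0"
    and "\<And>u. u \<in> Nw \<Longrightarrow> 1 \<le> f u \<and> f u \<le> D - 1"
    and "\<And>u v. u \<in> Nw \<Longrightarrow> v \<in> Nw \<Longrightarrow> E u v \<longleftrightarrow> (f u - 1) div 2 \<noteq> (f v - 1) div 2"
    and "\<And>x y. x \<in> Xw \<Longrightarrow> y \<in> Xw \<Longrightarrow> (f x = D \<or> f x = D + 1) \<and> (f x = f y \<longleftrightarrow> x = y)"
proof -
  obtain x1 x2 where X: "Xw = {x1, x2}" "x1 \<noteq> x2"
    using card_X by (meson card_2_iff)
  obtain g where g: "bij_betw g Nw {0..<D-1}"
    and adj_N: "\<And>u v. u \<in> Nw \<Longrightarrow> v \<in> Nw \<Longrightarrow> E u v \<longleftrightarrow> g u div 2 \<noteq> g v div 2"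
    using Nw_numbering[OF codeg_N] by blast
  define f where "f v = (if v = w then 0 else if v \<in> Nw then g v + 1 else if v = x1 then D else D + 1)"
    for v
  have f_N: "f u = g u + 1" "1 \<le> f u" "f u \<le> D - 1" if "u \<in> Nw" for u
    using that w_notin_Nw bij_betwE[OF g] unfolding f_def by fastforce+
  have f_X: "(f x = D \<or> f x = D + 1) \<and> (f x = f y \<longleftrightarrow> x = y)" if "x \<in> Xw" "y \<in> Xw" for x y
    using that X w_notin_Xw Nw_Xw_disjoint D_ge_3 unfolding f_def by auto
  have f_w: "f w = 0" unfolding f_def by simp
  have "f ` Cw = {0..<Suc (D+1)}"
  proof
    show "f ` Cw \<subseteq> {0..<Suc (D+1)}" using Cw_decomp f_N f_X f_w by fastforce
    show "{0..<Suc (D+1)} \<subseteq> f ` Cw"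
    proof
      fix y assume y: "y \<in> {0..<Suc (D+1)}"
      have "1 \<le> y \<Longrightarrow> y \<le> D - 1 \<Longrightarrow> y \<in> f ` Nw"
        using g f_N unfolding bij_betw_def by (force intro: image_eqI[of _ _ "inv_into Nw g (y - 1)"]
            simp: f_inv_into_f inv_into_into)
      moreover have "D \<in> f ` Xw" "D + 1 \<in> f ` Xw"
        using X f_X[of x1 x2] unfolding f_def using w_notin_Xw Nw_Xw_disjoint by auto
      ultimately show "y \<in> f ` Cw"
        using y f_w Cw_decomp by (cases "y = 0 \<or> y = D \<or> y = D + 1") fastforce+
    qed
  qed
  then have "bij_betw f Cw {0..<Suc (D+1)}"
    using card_Cw card_X finite_Cw by (simp add: bij_betw_def eq_card_imp_inj_on)
  with that f_w f_N f_X adj_N show ?thesis by simp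
qed

lemma Cw_iso_Hk:
  assumes card_X: "card Xw = 2" and codeg_X: "\<forall>x\<in>Xw. codeg x = D - 1"
    and codeg_N: "\<forall>u\<in>Nw. codeg u = D - 3" and inner_X: "\<forall>x\<in>Xw. card (neighbours n E x \<inter> Xw) = 1"
  shows "comp_iso E Cw (Hk (D+1)) (Suc (D+1))"
proof -
  obtain f where bij: "bij_betw f Cw {0..<Suc (D+1)}" and f_w: "f w = 0"
    and f_N: "\<And>u. u \<in> Nw \<Longrightarrow> 1 \<le> f u \<and> f u \<le> D - 1"
    and adj_N: "\<And>u v. u \<in> Nw \<Longrightarrow> v \<in> Nw \<Longrightarrow> E u v \<longleftrightarrow> (f u - 1) div 2 \<noteq> (f v - 1) div 2"
    and f_X: "\<And>x y. x \<in> Xw \<Longrightarrow> y \<in> Xw \<Longrightarrow> (f x = D \<or> f x = D + 1) \<and> (f x = f y \<longleftrightarrow> x = y)"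
    using Cw_labelling[OF card_X codeg_N] by blast
  have cases: "u = w \<or> u \<in> Nw \<or> u \<in> Xw" if "u \<in> Cw" for u
    using that Cw_decomp by blast
  have "E u v \<longleftrightarrow> Hk (D+1) (f u) (f v)" if "u \<in> Cw" "v \<in> Cw" for u v
    using cases[OF that(1)] cases[OF that(2)]
  proof (elim disjE)
    assume "u = w" "v = w"
    then show ?thesis using is_graph_irrefl[OF graph] Hk_irrefl by simp
  next
    assume "u = w" "v \<in> Nw"
    then show ?thesis
      using w_adj_iff[of v] Nw_bounded f_w f_N[of v] Hk_apex_mid[OF D_ge_3, of "f v"] by auto
  next
    assume "u = w" "v \<in> Xw"
    then show ?thesis
      using w_adj_iff[of v] Xw_bounded Nw_Xw_disjoint f_w f_X[of v v] Hk_apex_top[OF D_ge_3, of "f v"]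
      by auto
  next
    assume "v = w" "u \<in> Nw"
    then show ?thesis
      using w_adj_iff[of u] Nw_bounded f_w f_N[of u] Hk_apex_mid[OF D_ge_3, of "f u"]
        is_graph_sym_iff[OF graph] by auto
  next
    assume "v = w" "u \<in> Xw"
    then show ?thesis
      using w_adj_iff[of u] Xw_bounded Nw_Xw_disjoint f_w f_X[of u u] Hk_apex_top[OF D_ge_3, of "f u"]
        is_graph_sym_iff[OF graph] by auto
  next
    assume "u \<in> Nw" "v \<in> Nw"
    then show ?thesis
      using adj_N[of u v] f_N[of u] f_N[of v] Hk_mid_mid[OF D_ge_3, of "f u" "f v"] by fastforce
  next
    assume "u \<in> Nw" "v \<in> Xw"
    then show ?thesis
      using Xw_adj_Nw codeg_X f_N[of u] f_X[of v v] Hk_mid_top[OF D_ge_3, of "f u" "f v"] by auto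
  next
    assume "u \<in> Xw" "v \<in> Nw"
    then show ?thesis
      using Xw_adj_Nw codeg_X f_N[of v] f_X[of u u] Hk_mid_top[OF D_ge_3, of "f v" "f u"]
        is_graph_sym_iff[OF graph] by auto
  next
    assume "u \<in> Xw" "v \<in> Xw"
    then show ?thesis
      using Xw_pair_adj[OF card_X inner_X] f_X[of u v] f_X[of v u] Hk_top_top[of D] Hk_irrefl
      by auto
  qed
  with bij show ?thesis unfolding comp_iso_def by blast
qed

end

lemma pair_index_iff: "1 \<le> (y::nat) \<Longrightarrow> (y - 1) div 2 = q \<longleftrightarrow> y = 2*q+1 \<or> y = 2*q+2"
  by auto

context
  fixes D :: nat
  assumes D_ge_3: "D \<ge> 3"
begin

lemma neighbours_Hk_apex: "neighbours (Suc (D+1)) (Hk (D+1)) 0 = {1..D-1}"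
  unfolding neighbours_def Hk_iff using D_ge_3 by auto

lemma card_neighbours_Hk_mid:
  assumes D_odd: "odd D" and u: "1 \<le> u" "u \<le> D - 1"
  shows "card (neighbours (Suc (D+1)) (Hk (D+1)) u) = D"
proof -
  define q where "q = (u - 1) div 2"
  have uq: "u = 2*q+1 \<or> u = 2*q+2" using pair_index_iff[OF u(1)] q_def by blast
  have q_bound: "2*q+2 \<le> D - 1" using uq u D_odd by presburger
  define M where "M = {1..D-1} - {2*q+1, 2*q+2}"
  have "neighbours (Suc (D+1)) (Hk (D+1)) u = insert 0 (M \<union> {D, D+1})"
  proof (rule set_eqI)
    fix y
    have "y = 0 \<or> (1 \<le> y \<and> y \<le> D - 1) \<or> y = D \<or> y = D + 1 \<or> y > D + 1" by linarith
    then show "y \<in> neighbours (Suc (D+1)) (Hk (D+1)) u \<longleftrightarrow> y \<in> insert 0 (M \<union> {D, D+1})"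
    proof (elim disjE)
      assume "1 \<le> y \<and> y \<le> D - 1"
      then have "Hk (D+1) u y \<longleftrightarrow> \<not> (y = 2*q+1 \<or> y = 2*q+2)"
        using Hk_mid_mid[OF D_ge_3 u, of y] pair_index_iff[of y q] q_def uq by auto
      then show ?thesis using \<open>1 \<le> y \<and> y \<le> D - 1\<close> D_ge_3 unfolding neighbours_def M_def by auto
    qed (use Hk_apex_mid[OF D_ge_3 u] Hk_mid_top[OF D_ge_3 u, of y] Hk_out_of_range[of D y u] q_bound
        in \<open>auto simp: neighbours_def M_def\<close>)
  qed
  moreover have "card M = D - 3" unfolding M_def using q_bound by (subst card_Diff_subset) auto
  moreover have "0 \<notin> M \<union> {D, D+1}" "M \<inter> {D, D+1} = {}" "finite M"
    unfolding M_def using D_ge_3 by auto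
  ultimately show ?thesis using D_ge_3 by (simp add: card_Un_disjoint)
qed

lemma card_neighbours_Hk_top:
  assumes u: "u = D \<or> u = D + 1"
  shows "card (neighbours (Suc (D+1)) (Hk (D+1)) u) = D"
proof -
  define other where "other = (if u = D then D + 1 else D)"
  have "neighbours (Suc (D+1)) (Hk (D+1)) u = insert other {1..D-1}"
  proof (rule set_eqI)
    fix y
    have "y = 0 \<or> (1 \<le> y \<and> y \<le> D - 1) \<or> y = D \<or> y = D + 1 \<or> y > D + 1" by linarith
    then show "y \<in> neighbours (Suc (D+1)) (Hk (D+1)) u \<longleftrightarrow> y \<in> insert other {1..D-1}"
      using Hk_apex_top[OF D_ge_3 u] Hk_mid_top[OF D_ge_3, of y u] Hk_top_top[of D] Hk_irrefl
        Hk_out_of_range[of D y u] u D_ge_3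
      unfolding neighbours_def other_def by auto
  qed
  moreover have "other \<notin> {1..D-1}" unfolding other_def by auto
  ultimately show ?thesis using D_ge_3 by simp
qed

lemma deg_Hk:
  assumes "odd D" "u < Suc (D+1)"
  shows "deg (Suc (D+1)) (Hk (D+1)) u = (if u = 0 then D - 1 else D)"
proof -
  consider "u = 0" | "1 \<le> u \<and> u \<le> D - 1" | "u = D \<or> u = D + 1"
    using assms(2) by linarith
  then show ?thesis
    by cases (use neighbours_Hk_apex card_neighbours_Hk_mid[OF assms(1)] card_neighbours_Hk_top
        D_ge_3 in \<open>auto simp: deg_eq_card_neighbours\<close>)
qed

lemma comp_Hk_apex: "comp (Hk (D+1)) 0 = {..D+1}"
proof
  show "comp (Hk (D+1)) 0 \<subseteq> {..D+1}"
    by (rule comp_subset_closed) (auto simp: Hk_def)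
  have mid: "y \<in> comp (Hk (D+1)) 0" if "1 \<le> y" "y \<le> D - 1" for y
    using Hk_apex_mid[OF D_ge_3 that] comp_closed[OF comp_self] by blast
  have top: "y \<in> comp (Hk (D+1)) 0" if "y = D \<or> y = D + 1" for y
  proof -
    have "1 \<in> comp (Hk (D+1)) 0" using mid[of 1] D_ge_3 by simp
    moreover have "Hk (D+1) 1 y" using Hk_mid_top[OF D_ge_3, of 1 y] that D_ge_3 by simp
    ultimately
    show ?thesis by (rule comp_closed)
  qed
  show "{..D+1} \<subseteq> comp (Hk (D+1)) 0"
  proof
    fix y assume "y \<in> {..D+1}"
    then consider "y = 0" | "1 \<le> y \<and> y \<le> D - 1" | "y = D \<or> y = D + 1" by fastforce
    then show "y \<in> comp (Hk (D+1)) 0" by cases (use mid top comp_self in blast)+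
  qed
qed

text \<open>K_1 \/ co-M_(D-1) \/ K_2 is itself a nearly D-regular graph with deficient vertex 0, in which
  both top vertices see all of N.\<close>

lemma Hk_closed_walks:
  assumes D_odd: "odd D"
  shows "walks_between (Suc (D+1)) (Hk (D+1)) 3 0 0 = (D-1)*(D-3)"
    and "walks_between (Suc (D+1)) (Hk (D+1)) 4 0 0 = closed4_max D"
proof -
  interpret H: deficient_component "Suc (D+1)" "Hk (D+1)" D 0
    using D_odd D_ge_3 is_graph_Hk deg_Hk[OF D_odd] comp_Hk_apex by unfold_locales auto
  have N: "H.Nw = {1..D-1}" unfolding H.Nw_def by (rule neighbours_Hk_apex)
  have X: "H.Xw = {D, D+1}"
    unfolding H.Xw_def H.Cw_def comp_Hk_apex N using D_ge_3 by auto
  have "H.codeg x = D - 1" if "x \<in> H.Xw" for x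
  proof -
    have "neighbours (Suc (D+1)) (Hk (D+1)) x \<inter> H.Nw = H.Nw"
      using that Hk_mid_top[OF D_ge_3] unfolding N X neighbours_def by auto
    then show ?thesis unfolding H.codeg_def using H.card_Nw by simp
  qed
  then have t: "H.edges_NX = 2 * (D - 1)" unfolding H.edges_NX_def X by simp
  show "walks_between (Suc (D+1)) (Hk (D+1)) 3 0 0 = (D-1)*(D-3)"
    using H.closed_walks_3_eq_iff t by simp
  show "walks_between (Suc (D+1)) (Hk (D+1)) 4 0 0 = closed4_max D"
    using H.extremal_card_Xw_2(3)[OF t] X by simp
qed

end

locale closed_set_iso =
  fixes n N :: nat and E H :: graph and C :: "nat set" and f :: "nat \<Rightarrow> nat"
  assumes C_bounded: "C \<subseteq> {..<n}"
    and C_closed: "\<And>u. u \<in> C \<Longrightarrow> neighbours n E u \<subseteq> C"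
    and f_bij: "bij_betw f C {0..<N}"
    and f_iso: "\<forall>u\<in>C. \<forall>v\<in>C. E u v \<longleftrightarrow> H (f u) (f v)"
begin

lemma bij_betw_neighbours_iso:
  assumes u: "u \<in> C"
  shows "bij_betw f (neighbours n E u) (neighbours N H (f u))"
proof -
  have sub: "neighbours n E u \<subseteq> C" using C_closed[OF u] .
  have "f ` neighbours n E u = neighbours N H (f u)"
  proof
    show "f ` neighbours n E u \<subseteq> neighbours N H (f u)"
      using sub f_iso u bij_betwE[OF f_bij] unfolding neighbours_def by fastforce
    show "neighbours N H (f u) \<subseteq> f ` neighbours n E u"
    proof
      fix y assume y: "y \<in> neighbours N H (f u)"
      then obtain x where x: "x \<in> C" "f x = y"
        using f_bij unfolding bij_betw_def neighbours_def by (metis atLeast0LessThan imageE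
            lessThan_iff mem_Collect_eq)
      then show "y \<in> f ` neighbours n E u"
        using f_iso u y C_bounded unfolding neighbours_def by blast
    qed
  qed
  moreover have "inj_on f (neighbours n E u)"
    using f_bij sub unfolding bij_betw_def by (meson inj_on_subset)
  ultimately show ?thesis by (simp add: bij_betw_def)
qed

lemma walks_between_iso:
  "u \<in> C \<Longrightarrow> v \<in> C \<Longrightarrow> walks_between n E l u v = walks_between N H l (f u) (f v)"
proof (induction l arbitrary: u)
  case 0
  then show ?case using f_bij unfolding bij_betw_def inj_on_def by auto
next
  case (Suc l)
  have "walks_between n E (Suc l) u v = (\<Sum>x\<in>neighbours n E u. walks_between N H l (f x) (f v))"
    using Suc.IH C_closed[OF Suc.prems(1)] Suc.prems(2) by (simp add: subset_iff)
  also have "\<dots> = (\<Sum>y\<in>neighbours N H (f u). walks_between N H l y (f v))"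
    by (rule sum.reindex_bij_betw[OF bij_betw_neighbours_iso[OF Suc.prems(1)]])
  finally show ?case by simp
qed

end

lemma GDn_deficient_component:
  assumes "E \<in> GDn D n" "odd D" "D \<ge> 3"
  shows "deficient_component n E D (deficient_vertex D n E)"
proof -
  have E: "is_graph n E" "nearly_regular n D E" "\<forall>v<n. card (comp E v) \<le> 2 * D"
    using assms(1) unfolding GDn_def by auto
  interpret nearly_regular_graph n E D "deficient_vertex D n E"
    using nearly_regular_graph_deficient_vertex[OF E(1,2)] assms(3) by simp
  show ?thesis using E(3) w_bounded assms(2,3) by unfold_locales auto
qed

lemma Vfam_imp_GDn:
  assumes "E \<in> Vfam (D+1) n" "D \<ge> 3"
  shows "E \<in> GDn D n"
proof -
  obtain v where "v < n" and iso: "comp_iso E (comp E v) (Hk (D+1)) (Suc (D+1))"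
    and others: "\<And>u. u < n \<Longrightarrow> comp E u \<noteq> comp E v \<Longrightarrow> card (comp E u) \<le> 2 * (D+1) - 2"
    using assms(1) unfolding Vfam_def by auto
  have "card (comp E v) = Suc (D+1)"
    using iso unfolding comp_iso_def by (auto dest: bij_betw_same_card)
  then have "card (comp E u) \<le> 2 * D" if "u < n" for u
    using others[OF that] assms(2) by (cases "comp E u = comp E v") auto
  then show ?thesis using assms(1) unfolding Vfam_def GDn_def by auto
qed

text \<open>The isomorphism onto K_1 \/ co-M_(D-1) \/ K_2 must send the deficient vertex to the apex,
  the only vertex of degree D - 1 there.\<close>

lemma Vfam_closed_walks:
  assumes V: "E \<in> Vfam (D+1) n" and D: "D \<ge> 3"
  shows "walks_between n E j (deficient_vertex D n E) (deficient_vertex D n E)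
    = walks_between (Suc (D+1)) (Hk (D+1)) j 0 0"
proof -
  have g: "is_graph n E" and nr: "nearly_regular n D E" using V unfolding Vfam_def by auto
  obtain v where v: "v < n" and "comp_iso E (comp E v) (Hk (D+1)) (Suc (D+1))"
    using V unfolding Vfam_def by auto
  then obtain f where f: "bij_betw f (comp E v) {0..<Suc (D+1)}"
    and iso: "\<forall>u\<in>comp E v. \<forall>x\<in>comp E v. E u x \<longleftrightarrow> Hk (D+1) (f u) (f x)"
    unfolding comp_iso_def by blast
  interpret nearly_regular_graph n E D "deficient_vertex D n E"
    using nearly_regular_graph_deficient_vertex[OF g nr] D by simp
  interpret transfer: closed_set_iso n "Suc (D+1)" E "Hk (D+1)" "comp E v" f
    using comp_bounded[OF g v] neighbours_subset_comp f iso by unfold_locales auto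
  obtain u0 where u0: "u0 \<in> comp E v" "f u0 = 0"
    using f unfolding bij_betw_def by (metis atLeastLessThan_iff imageE zero_less_Suc le0)
  have "deg n E u0 = D - 1"
    using bij_betw_same_card[OF transfer.bij_betw_neighbours_iso[OF u0(1)]] u0(2) neighbours_Hk_apex[OF D]
    by (simp add: deg_eq_card_neighbours)
  then have "u0 = deficient_vertex D n E"
    using deg_other u0(1) comp_bounded[OF g v] D by fastforce
  then show ?thesis using transfer.walks_between_iso[OF u0(1) u0(1)] u0(2) by simp
qed

lemma extremal_closed_walks_imp_Vfam:
  assumes E: "E \<in> GDn D n" and D: "odd D" "D \<ge> 3"
    and c3: "walks_between n E 3 (deficient_vertex D n E) (deficient_vertex D n E) = (D-1)*(D-3)"
    and c4: "walks_between n E 4 (deficient_vertex D n E) (deficient_vertex D n E) = closed4_max D"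
  shows "E \<in> Vfam (D+1) n"
proof -
  interpret deficient_component n E D "deficient_vertex D n E"
    by (rule GDn_deficient_component[OF E D])
  have X: "card Xw = 2" using closed_walks_4_eq_imp_card_Xw c3 c4 by simp
  have t: "edges_NX = 2 * (D - 1)" using closed_walks_3_eq_iff c3 by simp
  have "comp_iso E Cw (Hk (D+1)) (Suc (D+1))"
    using Cw_iso_Hk[OF X extremal_card_Xw_2(1,2)[OF t X]] codeg_Xw_extremal(1)[OF t] X by simp
  then show ?thesis
    using E w_bounded unfolding Vfam_def GDn_def Cw_def by (auto intro!: exI[of _ "deficient_vertex D n E"])
qed

subsection \<open>Lexicographic maximisation of walk counts\<close>

lemma recurrence_agree_iff:
  fixes a a' c c' :: "nat \<Rightarrow> nat"
  assumes "\<And>i. a (Suc i) + c i = D * a i" "\<And>i. a' (Suc i) + c' i = D * a' i" "a 0 = a' 0"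
  shows "(\<forall>i\<le>j. a i = a' i) \<longleftrightarrow> (\<forall>i<j. c i = c' i)"
proof (induction j)
  case 0
  then show ?case using assms(3) by simp
next
  case (Suc j)
  have "(\<forall>i\<le>Suc j. a i = a' i) \<longleftrightarrow> (\<forall>i\<le>j. a i = a' i) \<and> a (Suc j) = a' (Suc j)"
    by (auto simp: le_Suc_eq)
  also have "\<dots> \<longleftrightarrow> (\<forall>i<j. c i = c' i) \<and> c j = c' j"
    using Suc.IH assms(1,2)[of j] by (metis add_left_cancel add_right_cancel order_refl)
  also have "\<dots> \<longleftrightarrow> (\<forall>i<Suc j. c i = c' i)"
    by (auto simp: less_Suc_eq)
  finally show ?case .
qed

locale Vfam_member =
  fixes D n :: nat and G0 :: graph
  assumes D_odd: "odd D" and D_ge_3: "D \<ge> 3" and G0_Vfam: "G0 \<in> Vfam (D+1) n"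
begin

definition "walk_seq E j = walk_count n E j (deficient_vertex D n E)"
definition "closed_seq E j = walks_between n E j (deficient_vertex D n E) (deficient_vertex D n E)"

lemma G0_GDn: "G0 \<in> GDn D n"
  using Vfam_imp_GDn[OF G0_Vfam D_ge_3] .

lemma walk_recurrences:
  assumes "E \<in> GDn D n"
  shows "walk_seq E (Suc i) + closed_seq E i = D * walk_seq E i"
    and "W n (Suc i) E + walk_seq E i = D * W n i E"
    and "walk_seq E 0 = 1" and "W n 0 E = n"
proof -
  interpret deficient_component n E D "deficient_vertex D n E"
    by (rule GDn_deficient_component[OF assms D_odd D_ge_3])
  show "walk_seq E (Suc i) + closed_seq E i = D * walk_seq E i"
    unfolding walk_seq_def closed_seq_def using walk_count_Suc_recurrence w_bounded by simp
  show "W n (Suc i) E + walk_seq E i = D * W n i E"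
    unfolding walk_seq_def using W_Suc_recurrence by simp
  show "walk_seq E 0 = 1" unfolding walk_seq_def using walk_count_0 w_bounded by simp
  show "W n 0 E = n" by (rule W_0)
qed

lemma walk_seq_agree_iff:
  assumes "E \<in> GDn D n"
  shows "(\<forall>i\<le>j. walk_seq E i = walk_seq G0 i) \<longleftrightarrow> (\<forall>i<j. closed_seq E i = closed_seq G0 i)"
  using walk_recurrences[OF assms] walk_recurrences[OF G0_GDn]
  by (intro recurrence_agree_iff[where D = D]) simp_all

lemma W_agree_iff:
  assumes "E \<in> GDn D n"
  shows "(\<forall>i\<le>j. W n i E = W n i G0) \<longleftrightarrow> (\<forall>i<j. walk_seq E i = walk_seq G0 i)"
  using walk_recurrences[OF assms] walk_recurrences[OF G0_GDn]
  by (intro recurrence_agree_iff[where D = D and a = "\<lambda>i. W n i E" and a' = "\<lambda>i. W n i G0"])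
    simp_all

lemma W_agree_from_1:
  assumes "E \<in> GDn D n"
  shows "(\<forall>j\<in>{1..l}. W n j E = W n j G0) \<longleftrightarrow> (\<forall>i\<le>l. W n i E = W n i G0)"
proof (intro iffI allI impI)
  fix i assume "\<forall>j\<in>{1..l}. W n j E = W n j G0" "i \<le> l"
  then show "W n i E = W n i G0"
    using walk_recurrences(4)[OF assms] walk_recurrences(4)[OF G0_GDn] by (cases i) auto
qed auto

lemma closed_seq_Vfam: "E \<in> Vfam (D+1) n \<Longrightarrow> closed_seq E j = closed_seq G0 j"
  unfolding closed_seq_def using Vfam_closed_walks G0_Vfam D_ge_3 by simp

lemma closed_seq_lex_le:
  assumes E: "E \<in> GDn D n" and eq: "\<And>i. i < j \<Longrightarrow> closed_seq E i = closed_seq G0 i"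
  shows "closed_seq E j \<le> closed_seq G0 j"
proof -
  interpret e: deficient_component n E D "deficient_vertex D n E"
    by (rule GDn_deficient_component[OF E D_odd D_ge_3])
  interpret z: deficient_component n G0 D "deficient_vertex D n G0"
    by (rule GDn_deficient_component[OF G0_GDn D_odd D_ge_3])
  have G0_3: "closed_seq G0 3 = (D-1)*(D-3)" and G0_4: "closed_seq G0 4 = closed4_max D"
    unfolding closed_seq_def using Vfam_closed_walks[OF G0_Vfam D_ge_3] Hk_closed_walks[OF D_ge_3 D_odd]
    by simp_all
  consider "j = 0" | "j = 1" | "j = 2" | "j = 3" | "j = 4" | "j \<ge> 5" by linarith
  then show ?thesis
  proof cases
    case 4
    then show ?thesis using e.closed_walks_3_le G0_3 by (simp add: closed_seq_def)
  next
    case 5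
    then show ?thesis using eq[of 3] e.closed_walks_4_le G0_3 G0_4 by (simp add: closed_seq_def)
  next
    case 6
    then have "E \<in> Vfam (D+1) n"
      using eq[of 3] eq[of 4] G0_3 G0_4 extremal_closed_walks_imp_Vfam[OF E D_odd D_ge_3]
      by (simp add: closed_seq_def)
    then show ?thesis using closed_seq_Vfam by simp
  qed (use e.closed_walks_1 e.closed_walks_2 z.closed_walks_1 z.closed_walks_2 in
      \<open>simp_all add: closed_seq_def\<close>)
qed

lemma W_lex_le:
  assumes E: "E \<in> GDn D n" and eq: "\<forall>j\<in>{1..l}. W n j E = W n j G0"
  shows "W n (Suc l) E \<le> W n (Suc l) G0"
proof -
  note rec = walk_recurrences[OF E] and rec0 = walk_recurrences[OF G0_GDn]
  have W_eq: "\<forall>i\<le>l. W n i E = W n i G0" using eq W_agree_from_1[OF E] by blast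
  show ?thesis
  proof (cases l)
    case 0
    then show ?thesis using rec(2)[of 0] rec0(2)[of 0] rec(3,4) rec0(3,4) by simp
  next
    case (Suc m)
    then have walks_eq: "\<forall>i\<le>m. walk_seq E i = walk_seq G0 i"
      using W_eq W_agree_iff[OF E, of l] by (simp add: less_Suc_eq_le)
    then have "closed_seq E m \<le> closed_seq G0 m"
      using closed_seq_lex_le[OF E] walk_seq_agree_iff[OF E] by blast
    then have "walk_seq E l \<ge> walk_seq G0 l"
      using rec(1)[of m] rec0(1)[of m] walks_eq Suc by simp
    then show ?thesis using rec(2)[of l] rec0(2)[of l] W_eq by simp
  qed
qed

lemma EX_ex_eq: "EX_ex n l (GDn D n) = {E \<in> GDn D n. \<forall>j\<in>{1..l}. W n j E = W n j G0}"
proof (induction l)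
  case 0
  then show ?case by simp
next
  case (Suc l)
  have G0: "G0 \<in> EX_ex n l (GDn D n)" using Suc G0_GDn by simp
  show ?case
  proof (intro set_eqI iffI)
    fix E assume "E \<in> EX_ex n (Suc l) (GDn D n)"
    then have E: "E \<in> GDn D n" and eq: "\<forall>j\<in>{1..l}. W n j E = W n j G0"
      and "W n (Suc l) G0 \<le> W n (Suc l) E" using G0 Suc by auto
    with W_lex_le[OF E eq] show "E \<in> {E \<in> GDn D n. \<forall>j\<in>{1..Suc l}. W n j E = W n j G0}"
      by (auto simp: le_Suc_eq)
  next
    fix E assume "E \<in> {E \<in> GDn D n. \<forall>j\<in>{1..Suc l}. W n j E = W n j G0}"
    then show "E \<in> EX_ex n (Suc l) (GDn D n)"
      using Suc W_lex_le by auto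
  qed
qed

lemma EX_inf_eq_Vfam: "EX_inf n (GDn D n) = Vfam (D+1) n"
proof (intro set_eqI iffI)
  fix E assume "E \<in> EX_inf n (GDn D n)"
  then have E: "E \<in> GDn D n" and "\<forall>j\<in>{1..6}. W n j E = W n j G0"
    unfolding EX_inf_def EX_ex_eq by auto
  then have "\<forall>i<6. walk_seq E i = walk_seq G0 i"
    using W_agree_from_1[OF E] W_agree_iff[OF E] by blast
  then have "\<forall>i<5. closed_seq E i = closed_seq G0 i"
    using walk_seq_agree_iff[OF E, of 5] by (simp add: less_Suc_eq_le)
  then show "E \<in> Vfam (D+1) n"
    using extremal_closed_walks_imp_Vfam[OF E D_odd D_ge_3] Vfam_closed_walks[OF G0_Vfam D_ge_3]
      Hk_closed_walks[OF D_ge_3 D_odd] by (simp add: closed_seq_def)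
next
  fix E assume V: "E \<in> Vfam (D+1) n"
  have E: "E \<in> GDn D n" using Vfam_imp_GDn[OF V D_ge_3] .
  have "\<forall>i\<le>j. walk_seq E i = walk_seq G0 i" for j
    using walk_seq_agree_iff[OF E] closed_seq_Vfam[OF V] by blast
  then have "\<forall>i\<le>l. W n i E = W n i G0" for l
    using W_agree_iff[OF E] by blast
  then show "E \<in> EX_inf n (GDn D n)"
    unfolding EX_inf_def EX_ex_eq using E W_agree_from_1[OF E] by blast
qed

end

subsection \<open>A member of the family V\<close>

definition circulant_adj :: "nat \<Rightarrow> nat \<Rightarrow> nat \<Rightarrow> nat \<Rightarrow> bool" where
  "circulant_adj s h a b \<longleftrightarrow> h < (b + s - a) mod s \<and> (b + s - a) mod s < s - h"

lemma circulant_adj_irrefl: "\<not> circulant_adj s h a a"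
  unfolding circulant_adj_def by simp

lemma circulant_adj_sym:
  assumes "a < s" "b < s"
  shows "circulant_adj s h a b = circulant_adj s h b a"
proof (cases "a = b")
  case False
  have "(b + s - a) mod s + (a + s - b) mod s = s"
  proof (cases "a < b")
    case True
    have "(b + s - a) mod s = b - a" using True assms by (simp add: mod_if)
    moreover have "(a + s - b) mod s = a + s - b" using True assms by simp
    ultimately show ?thesis using True assms by linarith
  next
    case False
    then have "b < a" using \<open>a \<noteq> b\<close> by simp
    have "(a + s - b) mod s = a - b" using \<open>b < a\<close> assms by (simp add: mod_if)
    moreover have "(b + s - a) mod s = b + s - a" using \<open>b < a\<close> assms by simp
    ultimately show ?thesis using \<open>b < a\<close> assms by linarith
  qed
  then show ?thesis unfolding circulant_adj_def by linarith
qed simp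

lemma card_circulant_adj:
  assumes a: "a < s"
  shows "card {b. b < s \<and> circulant_adj s h a b} = s - 2 * h - 1"
proof -
  define shift where "shift b = (b + s - a) mod s" for b
  define unshift where "unshift d = (d + a) mod s" for d
  have unshift_shift: "unshift (shift b) = b" if "b < s" for b
  proof -
    have "unshift (shift b) = (b + s - a + a) mod s"
      unfolding unshift_def shift_def by (simp add: mod_add_left_eq)
    then show ?thesis using a that by simp
  qed
  have shift_unshift: "shift (unshift d) = d" if "d < s" for d
  proof -
    have "shift (unshift d) = ((d + a) mod s + (s - a)) mod s"
      unfolding shift_def unshift_def using a by (simp add: add_diff_assoc)
    also have "\<dots> = ((d + a) + (s - a)) mod s" by (rule mod_add_left_eq)
    also have "(d + a) + (s - a) = d + s" using a by simp
    finally show ?thesis using that by simp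
  qed
  have "bij_betw shift {b. b < s \<and> circulant_adj s h a b} {h<..<s-h}"
  proof (rule bij_betw_byWitness[where f' = unshift])
    show "shift ` {b. b < s \<and> circulant_adj s h a b} \<subseteq> {h<..<s-h}"
      unfolding shift_def circulant_adj_def by auto
    show "unshift ` {h<..<s-h} \<subseteq> {b. b < s \<and> circulant_adj s h a b}"
      using shift_unshift a unfolding circulant_adj_def shift_def[symmetric] unshift_def
      by (auto simp: shift_def)
  qed (use unshift_shift shift_unshift in auto)
  then show ?thesis by (simp add: bij_betw_same_card)
qed

lemma div_eq_iff_block: "0 < (B::nat) \<Longrightarrow> j div B = b \<longleftrightarrow> b * B \<le> j \<and> j < b * B + B"
proof
  assume "0 < B" "j div B = b"
  then show "b * B \<le> j \<and> j < b * B + B"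
    using div_times_less_eq_dividend[of j B] dividend_less_div_times[of B j] by auto
next
  assume "b * B \<le> j \<and> j < b * B + B"
  then show "j div B = b" by (intro div_nat_eqI) (auto simp: mult.commute)
qed

text \<open>The witness: K_1 \/ co-M_(D-1) \/ K_2 on the vertices 0..D+1, and on the remaining
  n - (D+2) vertices (an even number) disjoint copies of K_(D+1) followed by one circulant graph of
  order between D+1 and 2D which absorbs the remainder modulo D+1.\<close>

locale witness_construction =
  fixes D n :: nat
  assumes D_odd: "odd D" and D_ge_3: "D \<ge> 3" and n_odd: "odd n" and n_ge: "n \<ge> 3 * D + 4"
begin

definition "rest_size = n - (D + 2)"
definition "clique_part = (rest_size div (D + 1) - 1) * (D + 1)"
definition "circ_size = rest_size - clique_part"
definition "circ_gap = (circ_size - 1 - D) div 2"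

definition rest_adj :: "nat \<Rightarrow> nat \<Rightarrow> bool" where
  "rest_adj i j \<longleftrightarrow> i < rest_size \<and> j < rest_size \<and> i \<noteq> j \<and>
     ((i < clique_part \<and> j < clique_part \<and> i div (D + 1) = j div (D + 1))
      \<or> (clique_part \<le> i \<and> clique_part \<le> j \<and> circulant_adj circ_size circ_gap (i - clique_part) (j - clique_part)))"

definition witness :: graph where
  "witness u v \<longleftrightarrow> Hk (D+1) u v \<or> (D + 2 \<le> u \<and> D + 2 \<le> v \<and> rest_adj (u - (D+2)) (v - (D+2)))"

lemma witness_sizes:
  shows "(D + 1) dvd clique_part" and "clique_part + circ_size = rest_size"
    and "circ_size \<le> 2 * D" and "circ_size - 2 * circ_gap - 1 = D"
proof -
  have even_rest: "even rest_size" unfolding rest_size_def using D_odd n_odd n_ge by presburger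
  have "rest_size \<ge> 2 * (D + 1)" unfolding rest_size_def using n_ge by simp
  then have "rest_size div (D + 1) \<ge> 2"
    by (metis div_le_mono nonzero_mult_div_cancel_right add_is_0 one_neq_zero)
  then have "2 * (D + 1) \<le> (rest_size div (D + 1)) * (D + 1)" by (rule mult_le_mono1)
  then have q: "(rest_size div (D + 1)) * (D + 1) \<ge> D + 1" by (simp add: order_trans)
  have clique: "clique_part = (rest_size div (D + 1)) * (D + 1) - (D + 1)"
    unfolding clique_part_def by (simp only: diff_mult_distrib mult_1)
  have rest: "rest_size = (rest_size div (D + 1)) * (D + 1) + rest_size mod (D + 1)"
    by (rule div_mult_mod_eq[symmetric])
  show "(D + 1) dvd clique_part" unfolding clique_part_def by (rule dvd_triv_right)
  show "clique_part + circ_size = rest_size" unfolding circ_size_def using clique q rest by linarith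
  have circ: "circ_size = D + 1 + rest_size mod (D + 1)"
    unfolding circ_size_def using clique rest q by linarith
  have "even (rest_size mod (D + 1))" using even_rest D_odd by (simp add: dvd_mod)
  then have "rest_size mod (D + 1) \<noteq> D" using D_odd by auto
  moreover have "rest_size mod (D + 1) < D + 1" by simp
  ultimately have "rest_size mod (D + 1) \<le> D - 1" by linarith
  then show "circ_size \<le> 2 * D" using circ D_ge_3 by linarith
  have "even (circ_size - 1 - D)" using circ \<open>even (rest_size mod (D + 1))\<close> by simp
  then have "2 * circ_gap = circ_size - 1 - D" unfolding circ_gap_def by simp
  then show "circ_size - 2 * circ_gap - 1 = D" using circ by linarith
qed

lemma rest_adj_bounded: "rest_adj i j \<Longrightarrow> i < rest_size \<and> j < rest_size"
  unfolding rest_adj_def by simp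

lemma rest_adj_sym: "rest_adj i j \<Longrightarrow> rest_adj j i"
proof -
  assume r: "rest_adj i j"
  then have "i - clique_part < circ_size \<and> j - clique_part < circ_size"
    if "clique_part \<le> i" "clique_part \<le> j"
    using witness_sizes(2) that unfolding rest_adj_def by linarith
  then show "rest_adj j i" using r circulant_adj_sym unfolding rest_adj_def by metis
qed

lemma is_graph_witness: "is_graph n witness"
  unfolding is_graph_def
proof (intro allI impI)
  fix u v assume e: "witness u v"
  show "u < n \<and> v < n \<and> u \<noteq> v \<and> witness v u"
  proof (cases "Hk (D+1) u v")
    case True
    then have "u < Suc (D+1) \<and> v < Suc (D+1) \<and> u \<noteq> v \<and> Hk (D+1) v u"
      using is_graph_Hk[of D] unfolding is_graph_def by blast
    then show ?thesis using n_ge unfolding witness_def by auto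
  next
    case False
    then have r: "D + 2 \<le> u" "D + 2 \<le> v" "rest_adj (u - (D+2)) (v - (D+2))"
      using e unfolding witness_def by auto
    then have "u - (D+2) < rest_size" "v - (D+2) < rest_size" "u - (D+2) \<noteq> v - (D+2)"
      unfolding rest_adj_def by auto
    then have "u < n" "v < n" "u \<noteq> v" using r(1,2) unfolding rest_size_def by auto
    moreover have "witness v u" using rest_adj_sym[OF r(3)] r(1,2) unfolding witness_def by simp
    ultimately show ?thesis by simp
  qed
qed

lemma neighbours_witness_low:
  "u \<le> D + 1 \<Longrightarrow> neighbours n witness u = neighbours (Suc (D+1)) (Hk (D+1)) u"
  using n_ge unfolding neighbours_def witness_def by (auto simp: Hk_def)

lemma neighbours_witness_high:
  assumes u: "D + 2 \<le> u"
  shows "neighbours n witness u = (\<lambda>j. j + (D+2)) ` {j. rest_adj (u - (D+2)) j}"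
proof (rule set_eqI)
  fix v
  have not_Hk: "\<not> Hk (D+1) u v" using Hk_out_of_range[of D u v] u by simp
  show "v \<in> neighbours n witness u \<longleftrightarrow> v \<in> (\<lambda>j. j + (D+2)) ` {j. rest_adj (u - (D+2)) j}"
  proof
    assume "v \<in> neighbours n witness u"
    then have "D + 2 \<le> v" "rest_adj (u - (D+2)) (v - (D+2))"
      using not_Hk unfolding neighbours_def witness_def by auto
    then show "v \<in> (\<lambda>j. j + (D+2)) ` {j. rest_adj (u - (D+2)) j}"
      by (intro image_eqI[of _ _ "v - (D+2)"]) auto
  next
    assume "v \<in> (\<lambda>j. j + (D+2)) ` {j. rest_adj (u - (D+2)) j}"
    then obtain j where j: "rest_adj (u - (D+2)) j" "v = j + (D+2)" by auto
    then have "j < rest_size" by (simp add: rest_adj_bounded)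
    then have "v < n" using j(2) unfolding rest_size_def by simp
    then show "v \<in> neighbours n witness u" using j u unfolding neighbours_def witness_def by simp
  qed
qed

lemma clique_block_bound:
  assumes "i < clique_part"
  shows "(i div (D + 1)) * (D + 1) + (D + 1) \<le> clique_part"
proof -
  obtain c where "clique_part = (D + 1) * c" using witness_sizes(1) unfolding dvd_def by blast
  then have c: "clique_part = c * (D + 1)" by simp
  have "i div (D + 1) < c"
  proof (rule ccontr)
    assume "\<not> i div (D + 1) < c"
    then have "c * (D + 1) \<le> (i div (D + 1)) * (D + 1)" by (intro mult_le_mono1) simp
    moreover have "(i div (D + 1)) * (D + 1) \<le> i" by (rule div_times_less_eq_dividend)
    ultimately show False using assms c by linarith
  qed
  then have "Suc (i div (D + 1)) * (D + 1) \<le> c * (D + 1)" by (intro mult_le_mono1) simp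
  then show ?thesis using c by simp
qed

lemma rest_adj_clique_iff:
  assumes "i < clique_part"
  shows "rest_adj i j \<longleftrightarrow> j \<in> {i div (D+1) * (D+1)..<i div (D+1) * (D+1) + (D+1)} - {i}"
  using assms clique_block_bound[OF assms] witness_sizes(2) div_eq_iff_block[of "D+1" j "i div (D+1)"]
  unfolding rest_adj_def by auto

lemma card_rest_adj:
  assumes i: "i < rest_size"
  shows "card {j. rest_adj i j} = D"
proof (cases "i < clique_part")
  case True
  then have "{j. rest_adj i j} = {i div (D+1) * (D+1)..<i div (D+1) * (D+1) + (D+1)} - {i}"
    using rest_adj_clique_iff by blast
  moreover have "i \<in> {i div (D+1) * (D+1)..<i div (D+1) * (D+1) + (D+1)}"
    using div_eq_iff_block[of "D+1" i "i div (D+1)"] by simp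
  ultimately show ?thesis by simp
next
  case False
  let ?circ = "{b. b < circ_size \<and> circulant_adj circ_size circ_gap (i - clique_part) b}"
  have "{j. rest_adj i j} = (\<lambda>b. b + clique_part) ` ?circ"
  proof (rule set_eqI)
    fix j
    show "j \<in> {j. rest_adj i j} \<longleftrightarrow> j \<in> (\<lambda>b. b + clique_part) ` ?circ"
      using False i witness_sizes(2) circulant_adj_irrefl[of circ_size circ_gap "i - clique_part"]
      unfolding rest_adj_def by (auto intro!: image_eqI[of _ _ "j - clique_part"])
  qed
  moreover have "card ?circ = D"
    using card_circulant_adj[of "i - clique_part" circ_size circ_gap] i False witness_sizes(2,4)
    by simp
  ultimately show ?thesis by (simp add: card_image inj_on_def)
qed

lemma deg_witness: "u < n \<Longrightarrow> deg n witness u = (if u = 0 then D - 1 else D)"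
proof -
  assume u: "u < n"
  show ?thesis
  proof (cases "u \<le> D + 1")
    case True
    then show ?thesis
      using deg_Hk[OF D_ge_3 D_odd, of u] neighbours_witness_low[OF True]
      by (simp add: deg_eq_card_neighbours)
  next
    case False
    then have "u - (D+2) < rest_size" using u unfolding rest_size_def by simp
    then show ?thesis
      using False card_rest_adj neighbours_witness_high[of u]
      by (simp add: deg_eq_card_neighbours card_image inj_on_def)
  qed
qed

lemma nearly_regular_witness: "nearly_regular n D witness"
  unfolding nearly_regular_def
proof
  show "\<forall>v<n. deg n witness v = D \<or> deg n witness v = D - 1" using deg_witness by simp
  show "\<exists>!v. v < n \<and> deg n witness v = D - 1"
    using deg_witness n_ge D_ge_3 by (intro ex1I[of _ 0]) (auto split: if_splits)
qed

lemma comp_witness_0: "comp witness 0 = {..D+1}"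
proof
  show "comp witness 0 \<subseteq> {..D+1}"
    by (rule comp_subset_closed) (auto simp: witness_def Hk_def)
  have "Hk (D+1) \<le> witness" unfolding witness_def by auto
  then show "{..D+1} \<subseteq> comp witness 0"
    using comp_mono comp_Hk_apex[OF D_ge_3] by blast
qed

lemma card_comp_witness_clique:
  assumes "i < clique_part"
  shows "card (comp witness (i + (D+2))) \<le> 2 * D"
proof -
  define b where "b = i div (D + 1)"
  define S where "S = {D+2 + b*(D+1) ..< D+2 + b*(D+1) + (D+1)}"
  have "comp witness (i + (D+2)) \<subseteq> S"
  proof (rule comp_subset_closed)
    have "b * (D + 1) \<le> i \<and> i < b * (D + 1) + (D + 1)"
      using div_eq_iff_block[of "D+1" i b] unfolding b_def by simp
    then show "i + (D+2) \<in> S" unfolding S_def by simp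
    fix x y assume x: "x \<in> S" and e: "witness x y"
    have "\<not> Hk (D+1) x y" using Hk_out_of_range[of D x y] x unfolding S_def by simp
    then have y: "D + 2 \<le> y" "rest_adj (x - (D+2)) (y - (D+2))" using e unfolding witness_def by auto
    have "x - (D+2) < clique_part" "(x - (D+2)) div (D+1) = b"
      using x clique_block_bound[OF assms] div_eq_iff_block[of "D+1" "x - (D+2)" b]
      unfolding S_def b_def by auto
    then have "y - (D+2) \<in> {b*(D+1) ..< b*(D+1) + (D+1)}"
      using y(2) rest_adj_clique_iff by auto
    then show "y \<in> S" using y(1) unfolding S_def by auto
  qed
  then have "card (comp witness (i + (D+2))) \<le> card S" by (intro card_mono) (auto simp: S_def)
  then show ?thesis unfolding S_def using D_ge_3 by simp
qed

lemma card_comp_witness_circ: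
  assumes "clique_part \<le> i" "i < rest_size"
  shows "card (comp witness (i + (D+2))) \<le> 2 * D"
proof -
  define S where "S = {D+2 + clique_part ..< n}"
  have "comp witness (i + (D+2)) \<subseteq> S"
  proof (rule comp_subset_closed)
    show "i + (D+2) \<in> S" using assms unfolding S_def rest_size_def by auto
    fix x y assume x: "x \<in> S" and e: "witness x y"
    have "\<not> Hk (D+1) x y" using Hk_out_of_range[of D x y] x unfolding S_def by simp
    then have y: "D + 2 \<le> y" "rest_adj (x - (D+2)) (y - (D+2))" using e unfolding witness_def by auto
    moreover have "clique_part \<le> x - (D+2)" using x unfolding S_def by auto
    ultimately have "clique_part \<le> y - (D+2)" "y - (D+2) < rest_size" unfolding rest_adj_def by auto
    then show "y \<in> S" using y(1) unfolding S_def rest_size_def by auto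
  qed
  then have "card (comp witness (i + (D+2))) \<le> card S" by (intro card_mono) (auto simp: S_def)
  also have "card S = circ_size" using witness_sizes(2) unfolding S_def rest_size_def by simp
  finally show ?thesis using witness_sizes(3) by simp
qed

lemma card_comp_witness: "u < n \<Longrightarrow> card (comp witness u) \<le> 2 * D"
proof -
  assume u: "u < n"
  show ?thesis
  proof (cases "u \<le> D + 1")
    case True
    then have "comp witness u \<subseteq> {..D+1}"
      by (intro comp_subset_closed) (auto simp: witness_def Hk_def)
    then have "card (comp witness u) \<le> card {..D+1}" by (intro card_mono) auto
    then show ?thesis using D_ge_3 by simp
  next
    case False
    then have "u = (u - (D+2)) + (D+2)" "u - (D+2) < rest_size" using u unfolding rest_size_def by auto
    then show ?thesis
      using card_comp_witness_clique card_comp_witness_circ by (metis not_le)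
  qed
qed

lemma witness_in_Vfam: "witness \<in> Vfam (D+1) n"
proof -
  have "comp_iso witness (comp witness 0) (Hk (D+1)) (Suc (D+1))"
    unfolding comp_iso_def comp_witness_0
  proof (intro exI[of _ id] conjI)
    show "bij_betw id {..D + 1} {0..<Suc (D + 1)}" by (simp add: atLeast0LessThan lessThan_Suc_atMost)
    show "\<forall>u\<in>{..D + 1}. \<forall>v\<in>{..D + 1}. witness u v = Hk (D + 1) (id u) (id v)"
      unfolding witness_def by auto
  qed
  then show ?thesis
    unfolding Vfam_def using is_graph_witness nearly_regular_witness card_comp_witness n_ge D_ge_3
    by (auto intro!: exI[of _ 0])
qed

end

theorem lemma3p3:
  fixes \<Delta> n :: nat
  assumes "odd \<Delta>" "\<Delta> \<ge> 3" "odd n" "n \<ge> 3 * \<Delta> + 4"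
  shows "EX_inf n (GDn \<Delta> n) = Vfam (\<Delta> + 1) n"
proof -
  interpret witness_construction \<Delta> n using assms by unfold_locales
  interpret Vfam_member \<Delta> n witness using assms(1,2) witness_in_Vfam by unfold_locales
  show ?thesis by (rule EX_inf_eq_Vfam)
qed

end
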